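(* In the setting described in the context, let $E$ be a bounded subset of $X$. If $(P_s)$ has the strong duality property (resp. the strict strong duality property) with Lagrange multiplier $\varphi_s\in D(A^* )$, then $\{(\bar P_{[0,T]}):T>0\}$ is dissipative (resp. strictly dissipative) at $(y_s,u_s)$ with respect to the supply rate $\omega(y,u)=f^0(y,u)-f^0(y_s,u_s)$, with storage function $S(y)=-\langle\varphi_s,y\rangle_{X^*,X}$ for $y\in E$. Consequently, under the strict strong duality property, $\{(\bar P_{[0,T]}):T>0\}$ has the measure-turnpike property at $(y_s,u_s)$.
   Context: Setting. - $X,U$ are reflexive Banach spaces, $E\subset X$ and $F\subset U$. - $A$ generates a $C_0$-semigroup $e^{tA}$ on $X$, with adjoint $A^*:D(A^* )\subset X^*\to X^*$. - $f:X\times U\to X$ is continuous and Lipschitz in $(y,u)$. - $f^0:X\times U\to\mathbb R$ is continuous and bounded below. Dynamic problem. For $T>0$, problem $(\bar P_{[0,T]})$ is to minimize $\frac1T\int_0^Tf^0(y,u)\,dt$ over admissible pairs, with free terminal states. - An admissible pair is $(y,u)\in C([0,T];X)\times L^2(0,T;U)$ with $y(\tau)=e^{\tau A}y(0)+\int_0^\tau e^{(\tau-t)A}f(y,u)\,dt$ for $\tau\in[0,T]$, $y(t)\in E$ and $u(t)\in F$. - It is assumed to have an optimal solution $(y^T,u^T)$ for each $T$. Static problem. Problem $(P_s)$ is to minimize $f^0(y,u)$ over $(y,u)\in E\times F$ with $\langle A^*\varphi,y\rangle+\langle\varphi,f(y,u)\rangle=0$ for all $\varphi\in D(A^* )$.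 It has an optimal solution $(y_s,u_s)$. $\mathcal K$-class functions. A $\mathcal K$-class function is continuous, monotone increasing, $\alpha:[0,\infty)\to[0,\infty)$, with $\alpha(0)=0$. Strong duality. $(P_s)$ has the strong duality property if there is $\varphi_s\in D(A^* )$ such that $(y_s,u_s)$ minimizes over $E\times F$ the Lagrangian $$L(y,u,\varphi_s)=f^0(y,u)+\langle A^*\varphi_s,y\rangle_{X^*,X}+\langle\varphi_s,f(y,u)\rangle_{X^*,X}.$$ It has the strict strong duality property if moreover there is a $\mathcal K$-class $\alpha$ with $$L(y,u,\varphi_s)\ge L(y_s,u_s,\varphi_s)+\alpha(\|(y-y_s,u-u_s)\|_{X\times U})\quad\text{for all }(y,u)\in E\times F.$$ Dissipativity. $\{(\bar P_{[0,T]})\}$ is dissipative at $(y_s,u_s)$ with storage function $S:E\to\mathbb R$ (locally bounded, bounded below) if for all $T>0$, all admissible pairs and all $\tau\in[0,T]$, $$S(y(0))+\int_0^\tau\omega(y,u)\,dt\ge S(y(\tau)).$$ It is strictly dissipative if, for some $\mathcal K$-class $\alpha$, the right-hand side additionally contains $+\int_0^\tau\alpha(\|(y(t)-y_s,u(t)-u_s)\|_{X\times U})\,dt$. Measure-turnpike property at $(y_s,u_s)$. For every $\varepsilon>0$ there is $\Lambda(\varepsilon)>0$ with $|\{t\in[0,T]:\|(y^T(t)-y_s,u^T(t)-u_s)\|_{X\times U}>\varepsilon\}|\le\Lambda(\varepsilon)$ for all $T>0$ and any optimal solution $(y^T,u^T)$. *)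

theory Defs
  imports "HOL-Analysis.Analysis"
begin

definition reflexive_space :: "'a::real_normed_vector itself \<Rightarrow> bool" where
  "reflexive_space _ \<longleftrightarrow>
     (\<forall>\<Phi> :: ('a \<Rightarrow>\<^sub>L real) \<Rightarrow>\<^sub>L real. \<exists>x::'a. \<forall>\<phi>. blinfun_apply \<Phi> \<phi> = blinfun_apply \<phi> x)"

definition C0_semigroup :: "(real \<Rightarrow> 'a::real_normed_vector \<Rightarrow>\<^sub>L 'a) \<Rightarrow> bool" where
  "C0_semigroup S \<longleftrightarrow>
     S 0 = id_blinfun \<and>
     (\<forall>s\<ge>0. \<forall>t\<ge>0. S (s + t) = S s o\<^sub>L S t) \<and>
     (\<forall>x. ((\<lambda>t. blinfun_apply (S t) x) \<longlongrightarrow> x) (at_right 0))"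

text \<open>Graph of the infinitesimal generator A of the semigroup S:
  y is in D(A) and A y = z.\<close>
definition gen_graph :: "(real \<Rightarrow> 'a::real_normed_vector \<Rightarrow>\<^sub>L 'a) \<Rightarrow> 'a \<Rightarrow> 'a \<Rightarrow> bool" where
  "gen_graph S y z \<longleftrightarrow> ((\<lambda>t. (blinfun_apply (S t) y - y) /\<^sub>R t) \<longlongrightarrow> z) (at_right 0)"

text \<open>Graph of the adjoint A*: phi is in D(A*) and A* phi = psi.\<close>
definition adj_gen_graph ::
  "(real \<Rightarrow> 'a::real_normed_vector \<Rightarrow>\<^sub>L 'a) \<Rightarrow> ('a \<Rightarrow>\<^sub>L real) \<Rightarrow> ('a \<Rightarrow>\<^sub>L real) \<Rightarrow> bool" where
  "adj_gen_graph S \<phi> \<psi> \<longleftrightarrow> (\<forall>y z. gen_graph S y z \<longrightarrow> blinfun_apply \<phi> z = blinfun_apply \<psi> y)"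

definition strongly_measurable_on :: "real set \<Rightarrow> (real \<Rightarrow> 'a::topological_space) \<Rightarrow> bool" where
  "strongly_measurable_on I u \<longleftrightarrow>
     (\<exists>s :: nat \<Rightarrow> real \<Rightarrow> 'a. (\<forall>n. simple_function (lebesgue_on I) (s n)) \<and>
        (AE t in lebesgue_on I. (\<lambda>n. s n t) \<longlonglongrightarrow> u t))"

definition L2_on :: "real set \<Rightarrow> (real \<Rightarrow> 'a::real_normed_vector) \<Rightarrow> bool" where
  "L2_on I u \<longleftrightarrow> strongly_measurable_on I u \<and> integrable (lebesgue_on I) (\<lambda>t. (norm (u t))\<^sup>2)"

text \<open>Extended-valued Lebesgue integral (positive part minus negative part);
  used for integrands that are bounded below, where it may be +infinity.\<close>
definition ext_int :: "real set \<Rightarrow> (real \<Rightarrow> real) \<Rightarrow> ereal" where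
  "ext_int I g = enn2ereal (\<integral>\<^sup>+ t\<in>I. ennreal (g t) \<partial>lebesgue)
               - enn2ereal (\<integral>\<^sup>+ t\<in>I. ennreal (- g t) \<partial>lebesgue)"

definition K_class :: "(real \<Rightarrow> real) \<Rightarrow> bool" where
  "K_class \<alpha> \<longleftrightarrow> continuous_on {0..} \<alpha> \<and> strict_mono_on {0..} \<alpha> \<and> \<alpha> 0 = 0 \<and>
                  (\<forall>r\<ge>0. \<alpha> r \<ge> 0)"

definition admissible ::
  "(real \<Rightarrow> 'x::banach \<Rightarrow>\<^sub>L 'x) \<Rightarrow> ('x \<Rightarrow> 'u::banach \<Rightarrow> 'x) \<Rightarrow> 'x set \<Rightarrow> 'u set \<Rightarrow> real
     \<Rightarrow> (real \<Rightarrow> 'x) \<Rightarrow> (real \<Rightarrow> 'u) \<Rightarrow> bool" where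
  "admissible S f E F T y u \<longleftrightarrow>
     continuous_on {0..T} y \<and> L2_on {0..T} u \<and>
     (\<forall>\<tau>\<in>{0..T}. ((\<lambda>t. blinfun_apply (S (\<tau> - t)) (f (y t) (u t)))
                      has_integral (y \<tau> - blinfun_apply (S \<tau>) (y 0))) {0..\<tau>}) \<and>
     (\<forall>t\<in>{0..T}. y t \<in> E \<and> u t \<in> F)"

definition cost :: "('x \<Rightarrow> 'u \<Rightarrow> real) \<Rightarrow> real \<Rightarrow> (real \<Rightarrow> 'x) \<Rightarrow> (real \<Rightarrow> 'u) \<Rightarrow> ereal" where
  "cost f0 T y u = ext_int {0..T} (\<lambda>t. f0 (y t) (u t)) / ereal T"

definition optimal_dyn ::
  "(real \<Rightarrow> 'x::banach \<Rightarrow>\<^sub>L 'x) \<Rightarrow> ('x \<Rightarrow> 'u::banach \<Rightarrow> 'x) \<Rightarrow> ('x \<Rightarrow> 'u \<Rightarrow> real)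
     \<Rightarrow> 'x set \<Rightarrow> 'u set \<Rightarrow> real \<Rightarrow> (real \<Rightarrow> 'x) \<Rightarrow> (real \<Rightarrow> 'u) \<Rightarrow> bool" where
  "optimal_dyn S f f0 E F T y u \<longleftrightarrow>
     admissible S f E F T y u \<and>
     (\<forall>y' u'. admissible S f E F T y' u' \<longrightarrow> cost f0 T y u \<le> cost f0 T y' u')"

definition static_feasible ::
  "(real \<Rightarrow> 'x::banach \<Rightarrow>\<^sub>L 'x) \<Rightarrow> ('x \<Rightarrow> 'u::banach \<Rightarrow> 'x) \<Rightarrow> 'x set \<Rightarrow> 'u set \<Rightarrow> 'x \<Rightarrow> 'u \<Rightarrow> bool" where
  "static_feasible S f E F y u \<longleftrightarrow> y \<in> E \<and> u \<in> F \<and>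
     (\<forall>\<phi> \<psi>. adj_gen_graph S \<phi> \<psi> \<longrightarrow> blinfun_apply \<psi> y + blinfun_apply \<phi> (f y u) = 0)"

definition static_optimal ::
  "(real \<Rightarrow> 'x::banach \<Rightarrow>\<^sub>L 'x) \<Rightarrow> ('x \<Rightarrow> 'u::banach \<Rightarrow> 'x) \<Rightarrow> ('x \<Rightarrow> 'u \<Rightarrow> real)
     \<Rightarrow> 'x set \<Rightarrow> 'u set \<Rightarrow> 'x \<Rightarrow> 'u \<Rightarrow> bool" where
  "static_optimal S f f0 E F ys us \<longleftrightarrow> static_feasible S f E F ys us \<and>
     (\<forall>y u. static_feasible S f E F y u \<longrightarrow> f0 ys us \<le> f0 y u)"

text \<open>Lagrangian L(y,u,phi) = f0(y,u) + <A* phi, y> + <phi, f(y,u)>, with psi = A* phi.\<close>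
definition lagrangian ::
  "('x::banach \<Rightarrow> 'u::banach \<Rightarrow> 'x) \<Rightarrow> ('x \<Rightarrow> 'u \<Rightarrow> real) \<Rightarrow> ('x \<Rightarrow>\<^sub>L real) \<Rightarrow> ('x \<Rightarrow>\<^sub>L real)
     \<Rightarrow> 'x \<Rightarrow> 'u \<Rightarrow> real" where
  "lagrangian f f0 \<phi> \<psi> y u = f0 y u + blinfun_apply \<psi> y + blinfun_apply \<phi> (f y u)"

definition strong_duality_with ::
  "(real \<Rightarrow> 'x::banach \<Rightarrow>\<^sub>L 'x) \<Rightarrow> ('x \<Rightarrow> 'u::banach \<Rightarrow> 'x) \<Rightarrow> ('x \<Rightarrow> 'u \<Rightarrow> real)
     \<Rightarrow> 'x set \<Rightarrow> 'u set \<Rightarrow> 'x \<Rightarrow> 'u \<Rightarrow> ('x \<Rightarrow>\<^sub>L real) \<Rightarrow> bool" where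
  "strong_duality_with S f f0 E F ys us \<phi>s \<longleftrightarrow>
     (\<exists>\<psi>s. adj_gen_graph S \<phi>s \<psi>s \<and>
        (\<forall>y\<in>E. \<forall>u\<in>F. lagrangian f f0 \<phi>s \<psi>s ys us \<le> lagrangian f f0 \<phi>s \<psi>s y u))"

definition strict_strong_duality_with ::
  "(real \<Rightarrow> 'x::banach \<Rightarrow>\<^sub>L 'x) \<Rightarrow> ('x \<Rightarrow> 'u::banach \<Rightarrow> 'x) \<Rightarrow> ('x \<Rightarrow> 'u \<Rightarrow> real)
     \<Rightarrow> 'x set \<Rightarrow> 'u set \<Rightarrow> 'x \<Rightarrow> 'u \<Rightarrow> ('x \<Rightarrow>\<^sub>L real) \<Rightarrow> bool" where
  "strict_strong_duality_with S f f0 E F ys us \<phi>s \<longleftrightarrow>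
     (\<exists>\<psi>s \<alpha>. adj_gen_graph S \<phi>s \<psi>s \<and> K_class \<alpha> \<and>
        (\<forall>y\<in>E. \<forall>u\<in>F. lagrangian f f0 \<phi>s \<psi>s y u \<ge>
            lagrangian f f0 \<phi>s \<psi>s ys us + \<alpha> (norm (y - ys, u - us))))"

definition storage_function :: "'x::real_normed_vector set \<Rightarrow> ('x \<Rightarrow> real) \<Rightarrow> bool" where
  "storage_function E St \<longleftrightarrow> bdd_below (St ` E) \<and>
     (\<forall>x\<in>E. \<exists>r>0. bounded (St ` (E \<inter> ball x r)))"

definition dissipative ::
  "(real \<Rightarrow> 'x::banach \<Rightarrow>\<^sub>L 'x) \<Rightarrow> ('x \<Rightarrow> 'u::banach \<Rightarrow> 'x) \<Rightarrow> 'x set \<Rightarrow> 'u set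
     \<Rightarrow> ('x \<Rightarrow> 'u \<Rightarrow> real) \<Rightarrow> ('x \<Rightarrow> real) \<Rightarrow> bool" where
  "dissipative S f E F \<omega> St \<longleftrightarrow> storage_function E St \<and>
     (\<forall>T>0. \<forall>y u. admissible S f E F T y u \<longrightarrow> (\<forall>\<tau>\<in>{0..T}.
        ereal (St (y 0)) + ext_int {0..\<tau>} (\<lambda>t. \<omega> (y t) (u t)) \<ge> ereal (St (y \<tau>))))"

definition strictly_dissipative ::
  "(real \<Rightarrow> 'x::banach \<Rightarrow>\<^sub>L 'x) \<Rightarrow> ('x \<Rightarrow> 'u::banach \<Rightarrow> 'x) \<Rightarrow> 'x set \<Rightarrow> 'u set
     \<Rightarrow> 'x \<Rightarrow> 'u \<Rightarrow> ('x \<Rightarrow> 'u \<Rightarrow> real) \<Rightarrow> ('x \<Rightarrow> real) \<Rightarrow> bool" where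
  "strictly_dissipative S f E F ys us \<omega> St \<longleftrightarrow> storage_function E St \<and>
     (\<exists>\<alpha>. K_class \<alpha> \<and>
       (\<forall>T>0. \<forall>y u. admissible S f E F T y u \<longrightarrow> (\<forall>\<tau>\<in>{0..T}.
          ereal (St (y 0)) + ext_int {0..\<tau>} (\<lambda>t. \<omega> (y t) (u t))
            \<ge> ereal (St (y \<tau>)) + ext_int {0..\<tau>} (\<lambda>t. \<alpha> (norm (y t - ys, u t - us))))))"

definition measure_turnpike ::
  "(real \<Rightarrow> 'x::banach \<Rightarrow>\<^sub>L 'x) \<Rightarrow> ('x \<Rightarrow> 'u::banach \<Rightarrow> 'x) \<Rightarrow> ('x \<Rightarrow> 'u \<Rightarrow> real)
     \<Rightarrow> 'x set \<Rightarrow> 'u set \<Rightarrow> 'x \<Rightarrow> 'u \<Rightarrow> bool" where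
  "measure_turnpike S f f0 E F ys us \<longleftrightarrow>
     (\<forall>\<epsilon>>0. \<exists>\<Lambda>>0. \<forall>T>0. \<forall>y u. optimal_dyn S f f0 E F T y u \<longrightarrow>
        emeasure lebesgue {t\<in>{0..T}. norm (y t - ys, u t - us) > \<epsilon>} \<le> ennreal \<Lambda>)"

end

theory Submission
  imports Defs
begin

text \<open>
  Mild solutions of the state equation are weak solutions, so for \<phi>s \<in> D(A*) the function
  t \<mapsto> \<phi>s(y t) has derivative (A*\<phi>s)(y) + \<phi>s(f(y, u)). Integrating the Lagrangian inequality
  L(y, u, \<phi>s) \<ge> L(ys, us, \<phi>s) + \<alpha>(\<parallel>(y - ys, u - us)\<parallel>) along an admissible trajectory, and using
  L(ys, us, \<phi>s) = f0(ys, us) by static feasibility, gives the (strict) dissipation inequality with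
  storage -\<phi>s. Static feasible pairs are equilibria of the mild equation, since D(A*) separates
  points. Comparing an optimal trajectory with the steady state therefore makes the supply integral
  nonpositive, so \<integral>\<alpha>(\<parallel>(y - ys, u - us)\<parallel>) is bounded by the oscillation of -\<phi>s on the bounded set E,
  uniformly in T; Markov's inequality then bounds the time spent at distance > \<epsilon>.
\<close>

section \<open>Norming functionals\<close>

definition norm_dominated_subspace :: "('a::real_normed_vector \<times> real) set \<Rightarrow> bool" where
  "norm_dominated_subspace M \<longleftrightarrow> subspace M \<and> (\<forall>(x, a)\<in>M. a \<le> norm x)"

lemma norm_dominated_extension_value:
  fixes M :: "('a::real_normed_vector \<times> real) set"
  assumes dom: "norm_dominated_subspace M"
  shows "\<exists>c. \<forall>(w, a)\<in>M. a - norm (w - x0) \<le> c \<and> c \<le> norm (w + x0) - a"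
proof -
  have sM: "subspace M" and le: "\<And>w a. (w, a) \<in> M \<Longrightarrow> a \<le> norm w"
    using dom unfolding norm_dominated_subspace_def by auto
  have zero: "(0, 0) \<in> M"
    using subspace_0[OF sM] by (simp add: zero_prod_def)
  define L where "L = {a - norm (w - x0) | w a. (w, a) \<in> M}"
  have L_le: "l \<le> norm (w' + x0) - a'" if l: "l \<in> L" and w'a': "(w', a') \<in> M" for l w' a'
  proof -
    obtain w a where wa: "l = a - norm (w - x0)" "(w, a) \<in> M"
      using l unfolding L_def by blast
    have "(w + w', a + a') \<in> M"
      using subspace_add[OF sM wa(2) w'a'] by simp
    then have "a + a' \<le> norm (w + w')" by (rule le)
    also have "\<dots> \<le> norm (w - x0) + norm (w' + x0)"
      using norm_triangle_ineq[of "w - x0" "w' + x0"] by simp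
    finally show ?thesis using wa(1) by simp
  qed
  have "a - norm (w - x0) \<le> Sup L" if "(w, a) \<in> M" for w a
    using that L_le[OF _ zero] by (intro cSup_upper) (auto simp: L_def intro!: bdd_aboveI)
  moreover have "Sup L \<le> norm (w + x0) - a" if "(w, a) \<in> M" for w a
    using zero L_le[OF _ that] by (intro cSup_least) (auto simp: L_def)
  ultimately show ?thesis by blast
qed

lemma norm_dominated_subspace_extend:
  fixes M :: "('a::real_normed_vector \<times> real) set"
  assumes dom: "norm_dominated_subspace M"
  shows "\<exists>c. norm_dominated_subspace (span (insert (x0, c) M))"
proof -
  have sM: "subspace M" and le: "\<And>w a. (w, a) \<in> M \<Longrightarrow> a \<le> norm w"
    using dom unfolding norm_dominated_subspace_def by auto
  obtain c where c_lower: "\<And>w a. (w, a) \<in> M \<Longrightarrow> a - norm (w - x0) \<le> c"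
    and c_upper: "\<And>w a. (w, a) \<in> M \<Longrightarrow> c \<le> norm (w + x0) - a"
    using norm_dominated_extension_value[OF dom, of x0] by fast
  \<comment> \<open>rescaling (v, b) by 1 / \<bar>k\<bar> reduces the bound at v + k x0 to the bounds on c\<close>
  have new_dominated: "b + k * c \<le> norm (v + k *\<^sub>R x0)" if vb: "(v, b) \<in> M" for v b k
  proof -
    have scaled: "((1 / \<bar>k\<bar>) *\<^sub>R v, (1 / \<bar>k\<bar>) * b) \<in> M"
      using subspace_scale[OF sM vb, of "1 / \<bar>k\<bar>"] by simp
    consider "k = 0" | "k > 0" | "k < 0" by linarith
    then show ?thesis
    proof cases
      case 1
      then show ?thesis using le[OF vb] by simp
    next
      case 2
      have "k * c \<le> k * (norm ((1 / k) *\<^sub>R v + x0) - (1 / k) * b)"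
        using c_upper[OF scaled] 2 by (simp add: mult_left_mono)
      also have "\<dots> = norm (k *\<^sub>R ((1 / k) *\<^sub>R v + x0)) - b"
        using 2 by (simp add: right_diff_distrib)
      also have "k *\<^sub>R ((1 / k) *\<^sub>R v + x0) = v + k *\<^sub>R x0"
        using 2 by (simp add: scaleR_add_right)
      finally show ?thesis by simp
    next
      case 3
      have scaled_back: "(- k) *\<^sub>R ((1 / - k) *\<^sub>R v - x0) = v + k *\<^sub>R x0"
        using 3 by (simp add: scaleR_diff_right)
      have "b - norm (v + k *\<^sub>R x0) = - k * ((1 / - k) * b - norm ((1 / - k) *\<^sub>R v - x0))"
        using 3 by (simp add: right_diff_distrib flip: scaled_back)
      also have "\<dots> \<le> - k * c"
        using c_lower[OF scaled] 3 by (simp add: mult_left_mono)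
      finally show ?thesis by simp
    qed
  qed
  have "a \<le> norm x" if xa: "(x, a) \<in> span (insert (x0, c) M)" for x a
  proof -
    obtain k where "(x, a) - k *\<^sub>R (x0, c) \<in> M"
      using xa unfolding span_insert span_eq_iff[THEN iffD2, OF sM] by blast
    then have "(x - k *\<^sub>R x0, a - k * c) \<in> M" by simp
    from new_dominated[OF this, of k] show ?thesis by simp
  qed
  then show ?thesis
    unfolding norm_dominated_subspace_def by (intro exI[of _ c]) (auto simp: subspace_span)
qed

lemma norm_dominated_subspace_Union_chain:
  assumes dom: "\<And>X. X \<in> C \<Longrightarrow> norm_dominated_subspace X"
    and chain: "chain\<^sub>\<subseteq> C" and nonempty: "C \<noteq> {}"
  shows "norm_dominated_subspace (\<Union>C)"
proof -
  have comparable: "\<And>X Y. X \<in> C \<Longrightarrow> Y \<in> C \<Longrightarrow> X \<subseteq> Y \<or> Y \<subseteq> X"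
    using chain unfolding chain_subset_def by auto
  have sub: "\<And>X. X \<in> C \<Longrightarrow> subspace X"
    using dom by (simp add: norm_dominated_subspace_def)
  have "subspace (\<Union>C)"
    unfolding subspace_def
  proof (intro conjI ballI allI)
    show "0 \<in> \<Union>C"
      using nonempty subspace_0[OF sub] by blast
  next
    fix x y assume "x \<in> \<Union>C" "y \<in> \<Union>C"
    then obtain X Y where XY: "X \<in> C" "Y \<in> C" "x \<in> X" "y \<in> Y" by blast
    then have "x \<in> Y \<and> y \<in> Y \<or> x \<in> X \<and> y \<in> X"
      using comparable[of X Y] by blast
    then show "x + y \<in> \<Union>C"
      using XY subspace_add[OF sub] by blast
  next
    fix r x assume "x \<in> \<Union>C"
    then show "r *\<^sub>R x \<in> \<Union>C"
      using subspace_scale[OF sub] by blast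
  qed
  moreover have "a \<le> norm x" if xa: "(x, a) \<in> \<Union>C" for x a
  proof -
    obtain X where "X \<in> C" "(x, a) \<in> X" using xa by blast
    with dom show ?thesis unfolding norm_dominated_subspace_def by auto
  qed
  ultimately show ?thesis
    unfolding norm_dominated_subspace_def by auto
qed

lemma exists_total_norm_dominated_subspace:
  fixes z :: "'a::real_normed_vector"
  shows "\<exists>M. norm_dominated_subspace M \<and> (z, norm z) \<in> M \<and> fst ` M = UNIV"
proof -
  define A where "A = {M. norm_dominated_subspace M \<and> (z, norm z) \<in> M}"
  have "a \<le> norm x" if xa: "(x, a) \<in> span {(z, norm z)}" for x a
  proof -
    obtain k where "x = k *\<^sub>R z" "a = k * norm z"
      using xa unfolding span_singleton by auto
    then show ?thesis by (simp add: mult_right_mono)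
  qed
  then have "span {(z, norm z)} \<in> A"
    unfolding A_def norm_dominated_subspace_def by (simp add: span_base subspace_span case_prod_unfold)
  moreover have "\<Union>C \<in> A" if "C \<in> chains A" "C \<noteq> {}" for C
    using that norm_dominated_subspace_Union_chain[of C] unfolding chains_def A_def by blast
  ultimately have "\<forall>C\<in>chains A. \<exists>U\<in>A. \<forall>X\<in>C. X \<subseteq> U"
    by blast
  from Zorn_Lemma2[OF this] obtain M
    where MA: "M \<in> A" and maximal: "\<forall>X\<in>A. M \<subseteq> X \<longrightarrow> X = M"
    by blast
  have "x \<in> fst ` M" for x
  proof (rule ccontr)
    assume "x \<notin> fst ` M"
    have "norm_dominated_subspace M" using MA unfolding A_def by simp
    then obtain c where ext: "norm_dominated_subspace (span (insert (x, c) M))"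
      using norm_dominated_subspace_extend by blast
    have "M \<subseteq> span (insert (x, c) M)" "(x, c) \<in> span (insert (x, c) M)"
      by (simp_all add: span_base span_superset subset_iff)
    then have "span (insert (x, c) M) = M"
      using ext MA maximal by (auto simp: A_def)
    with \<open>(x, c) \<in> span (insert (x, c) M)\<close> \<open>x \<notin> fst ` M\<close> show False
      by (metis fst_conv image_eqI)
  qed
  then show ?thesis using MA unfolding A_def by blast
qed

lemma norm_dominated_subspace_functional:
  fixes M :: "('a::real_normed_vector \<times> real) set"
  assumes dom: "norm_dominated_subspace M" and total: "fst ` M = UNIV"
  shows "\<exists>\<theta>::('a \<Rightarrow>\<^sub>L real). \<forall>(x, a)\<in>M. blinfun_apply \<theta> x = a"
proof -
  have sM: "subspace M" and le: "\<And>x a. (x, a) \<in> M \<Longrightarrow> a \<le> norm x"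
    using dom unfolding norm_dominated_subspace_def by auto
  have unique: "a = b" if "(x, a) \<in> M" "(x, b) \<in> M" for x a b
  proof -
    have "(0, a - b) \<in> M" "(0, b - a) \<in> M"
      using subspace_diff[OF sM that(1) that(2)] subspace_diff[OF sM that(2) that(1)] by auto
    then show ?thesis using le[of 0 "a - b"] le[of 0 "b - a"] by simp
  qed
  define g where "g x = (THE a. (x, a) \<in> M)" for x
  have graph: "(x, g x) \<in> M" for x
  proof -
    have "x \<in> fst ` M" using total by simp
    then obtain a where xa: "(x, a) \<in> M" by force
    show ?thesis
      unfolding g_def by (rule theI[of _ a]) (use xa unique in auto)
  qed
  have "bounded_linear g"
  proof (rule bounded_linear_intro)
    show "g (x + y) = g x + g y" for x y
      using subspace_add[OF sM graph[of x] graph[of y]] by (intro unique[OF graph]) simp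
    show "g (r *\<^sub>R x) = r *\<^sub>R g x" for r x
      using subspace_scale[OF sM graph[of x], of r] by (intro unique[OF graph]) simp
    show "norm (g x) \<le> norm x * 1" for x
      using le[OF graph, of x] subspace_neg[OF sM graph[of x]] le[of "- x" "- g x"] by (simp add: abs_le_iff)
  qed
  then show ?thesis
    using unique[OF graph] by (intro exI[of _ "Blinfun g"]) (auto simp: bounded_linear_Blinfun_apply)
qed

lemma exists_norming_functional:
  fixes z :: "'a::real_normed_vector"
  shows "\<exists>\<theta>::('a \<Rightarrow>\<^sub>L real). blinfun_apply \<theta> z = norm z"
  using exists_total_norm_dominated_subspace[of z] norm_dominated_subspace_functional by fast

section \<open>Uniform boundedness\<close>

lemma norm_blinfun_le_of_bounded_on_ball:
  fixes T :: "'a::real_normed_vector \<Rightarrow>\<^sub>L 'b::real_normed_vector"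
  assumes r: "r > 0" and bnd: "\<And>x. x \<in> ball x0 r \<Longrightarrow> norm (blinfun_apply T x) \<le> n"
  shows "norm T \<le> 4 * n / r"
proof (rule norm_blinfun_bound)
  have n: "0 \<le> n" using bnd[of x0] r by (simp add: order_trans[OF norm_ge_zero])
  then show "0 \<le> 4 * n / r" using r by simp
  fix x :: 'a
  show "norm (blinfun_apply T x) \<le> 4 * n / r * norm x"
  proof (cases "x = 0")
    case False
    define w where "w = (r / (2 * norm x)) *\<^sub>R x"
    have "norm w = r / 2" using False r unfolding w_def by simp
    then have "x0 + w \<in> ball x0 r" using r by (simp add: dist_norm)
    then have "norm (blinfun_apply T w) \<le> 2 * n"
      using bnd[of "x0 + w"] bnd[of x0] r
        norm_triangle_ineq4[of "blinfun_apply T (x0 + w)" "blinfun_apply T x0"]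
      by (simp add: blinfun.add_right)
    moreover have "blinfun_apply T w = (r / (2 * norm x)) *\<^sub>R blinfun_apply T x"
      unfolding w_def by (simp add: blinfun.scaleR_right)
    ultimately show ?thesis using r False by (simp add: field_simps)
  qed simp
qed

lemma uniform_boundedness:
  fixes T :: "'i \<Rightarrow> ('a::banach \<Rightarrow>\<^sub>L 'b::real_normed_vector)"
  assumes pointwise: "\<And>x. \<exists>B. \<forall>i. norm (blinfun_apply (T i) x) \<le> B"
  shows "\<exists>B. \<forall>i. norm (T i) \<le> B"
proof -
  define K where "K n = {x. \<forall>i. norm (blinfun_apply (T i) x) \<le> real n}" for n :: nat
  have "K n = (\<Inter>i. {x. norm (blinfun_apply (T i) x) \<le> real n})" for n
    unfolding K_def by auto
  then have closed: "closed (K n)" for n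
    by (auto intro!: closed_INT closed_Collect_le continuous_intros)
  have cover: "\<Union>(range K) = UNIV"
  proof -
    have "x \<in> \<Union>(range K)" for x
    proof -
      obtain B where B: "\<forall>i. norm (blinfun_apply (T i) x) \<le> B" using pointwise by blast
      obtain n :: nat where "B \<le> real n" using real_arch_simple by blast
      then have "x \<in> K n" using B unfolding K_def by (auto intro: order_trans)
      then show ?thesis by auto
    qed
    then show ?thesis by auto
  qed
  have "\<exists>n. interior (K n) \<noteq> {}"
  proof (rule ccontr)
    assume "\<not> ?thesis"
    then have "euclidean interior_of \<Union>(range K) = {}"
      by (intro Baire_category_alt)
        (use completely_metrizable_space_euclidean closed in \<open>auto simp: euclidean_interior_of\<close>)
    then show False using cover by (simp add: euclidean_interior_of)
  qed
  then obtain n x0 where "x0 \<in> interior (K n)" by blast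
  then obtain r where r: "r > 0" "ball x0 r \<subseteq> K n"
    using open_contains_ball open_interior interior_subset by (metis subset_trans)
  then have "norm (T i) \<le> 4 * real n / r" for i
    by (intro norm_blinfun_le_of_bounded_on_ball) (auto simp: K_def)
  then show ?thesis by blast
qed

section \<open>Strongly continuous semigroups\<close>

locale strongly_continuous_semigroup =
  fixes S :: "real \<Rightarrow> 'x::banach \<Rightarrow>\<^sub>L 'x"
  assumes C0: "C0_semigroup S"
begin

lemma S_zero [simp]: "blinfun_apply (S 0) x = x"
  using C0 unfolding C0_semigroup_def by simp

lemma S_compose: "s \<ge> 0 \<Longrightarrow> t \<ge> 0 \<Longrightarrow> S (s + t) = S s o\<^sub>L S t"
  using C0 unfolding C0_semigroup_def by simp

lemma S_add:
  "s \<ge> 0 \<Longrightarrow> t \<ge> 0 \<Longrightarrow> blinfun_apply (S (s + t)) x = blinfun_apply (S s) (blinfun_apply (S t) x)"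
  by (simp add: S_compose)

lemma S_commute:
  "r \<ge> 0 \<Longrightarrow> t \<ge> 0 \<Longrightarrow> blinfun_apply (S t) (blinfun_apply (S r) x) = blinfun_apply (S r) (blinfun_apply (S t) x)"
  using S_add[of t r x] S_add[of r t x] by (simp add: add.commute)

lemma tendsto_S_at_right_0: "((\<lambda>t. blinfun_apply (S t) x) \<longlongrightarrow> x) (at_right 0)"
  using C0 unfolding C0_semigroup_def by simp

lemma S_near_0:
  assumes "e > 0"
  shows "\<exists>d>0. \<forall>h. 0 \<le> h \<and> h < d \<longrightarrow> norm (blinfun_apply (S h) x - x) < e"
proof -
  have "\<forall>\<^sub>F t in at_right 0. dist (blinfun_apply (S t) x) x < e"
    using tendsto_S_at_right_0[of x] assms by (auto simp: tendsto_iff)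
  then obtain d where "d > 0" "\<forall>h>0. h < d \<longrightarrow> dist (blinfun_apply (S h) x) x < e"
    by (auto simp: eventually_at_right_field)
  then show ?thesis
    using assms by (intro exI[of _ d]) (auto simp: dist_norm le_less)
qed

text \<open>Otherwise there are t_n \<rightarrow> 0+ with \<parallel>S t_n\<parallel> \<rightarrow> \<infinity>, although every orbit S t_n x converges;
  this contradicts the uniform boundedness principle.\<close>

lemma norm_S_bounded_near_0: "\<exists>d>0. \<exists>M. \<forall>t\<in>{0..d}. norm (S t) \<le> M"
proof (rule ccontr)
  assume "\<not> ?thesis"
  then have "\<exists>t\<in>{0..1 / (real n + 1)}. norm (S t) > real n + 1" for n :: nat
    by (auto simp: not_le)
  then obtain t where t: "\<And>n. t n \<in> {0..1 / (real n + 1)}" "\<And>n. norm (S (t n)) > real n + 1"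
    by metis
  have "norm (S 0) \<le> 1"
    by (rule norm_blinfun_bound) auto
  then have t_pos: "t n > 0" for n
    using t[of n] by (cases "t n = 0") auto
  have "t \<longlonglongrightarrow> 0"
  proof (rule tendsto_sandwich[of "\<lambda>_. 0" _ _ "\<lambda>n. 1 / (real n + 1)"])
    show "(\<lambda>n. 1 / (real n + 1)) \<longlonglongrightarrow> 0"
      using LIMSEQ_inverse_real_of_nat by (simp add: inverse_eq_divide add.commute)
  qed (use t in auto)
  then have "filterlim t (at_right 0) sequentially"
    unfolding filterlim_at using t_pos by (simp add: always_eventually less_imp_neq[symmetric])
  then have "(\<lambda>n. blinfun_apply (S (t n)) x) \<longlonglongrightarrow> x" for x
    using filterlim_compose[OF tendsto_S_at_right_0] by blast
  then have "Bseq (\<lambda>n. blinfun_apply (S (t n)) x)" for x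
    using convergent_imp_Bseq convergent_def by blast
  then have "\<exists>B. \<forall>n. norm (blinfun_apply (S (t n)) x) \<le> B" for x
    unfolding Bseq_def by blast
  from uniform_boundedness[OF this] obtain B where "\<And>n. norm (S (t n)) \<le> B" by blast
  moreover obtain n :: nat where "B \<le> real n" using real_arch_simple by blast
  ultimately show False using t(2)[of n] by (smt (verit))
qed

lemma norm_S_bounded_on: "\<exists>M\<ge>0. \<forall>t\<in>{0..T}. norm (S t) \<le> M"
proof -
  obtain d M1 where d: "d > 0" and M1: "\<And>t. t \<in> {0..d} \<Longrightarrow> norm (S t) \<le> M1"
    using norm_S_bounded_near_0 by blast
  have M1_nonneg: "M1 \<ge> 0"
    using M1[of 0] d by (simp add: order_trans[OF norm_ge_zero])
  have bounded_k: "\<exists>M\<ge>0. \<forall>t\<in>{0..real k * d}. norm (S t) \<le> M" for k :: nat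
  proof (induction k)
    case 0
    then show ?case using M1 M1_nonneg d by (auto intro!: exI[of _ M1])
  next
    case (Suc k)
    then obtain M where M: "M \<ge> 0" "\<And>t. t \<in> {0..real k * d} \<Longrightarrow> norm (S t) \<le> M" by blast
    have "norm (S t) \<le> max M1 (M1 * M)" if t: "t \<in> {0..real (Suc k) * d}" for t
    proof (cases "t \<le> d")
      case False
      have "S t = S d o\<^sub>L S (t - d)"
        using S_compose[of d "t - d"] False d by simp
      then have "norm (S t) \<le> norm (S d) * norm (S (t - d))"
        by (simp add: norm_blinfun_compose)
      also have "\<dots> \<le> M1 * M"
        using M1[of d] M(2)[of "t - d"] M(1) M1_nonneg False t d by (intro mult_mono) (auto simp: algebra_simps)
      finally show ?thesis by simp
    qed (use M1 t in \<open>auto intro: le_max_iff_disj[THEN iffD2]\<close>)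
    then show ?case using M1_nonneg M by (intro exI[of _ "max M1 (M1 * M)"]) auto
  qed
  obtain k :: nat where "T / d \<le> real k" using real_arch_simple by blast
  then have "T \<le> real k * d" using d by (simp add: field_simps)
  then show ?thesis using bounded_k[of k] by fastforce
qed

lemma norm_S_diff_le:
  assumes "0 \<le> a" "a \<le> b"
  shows "norm (blinfun_apply (S b) x - blinfun_apply (S a) x) \<le> norm (S a) * norm (blinfun_apply (S (b - a)) x - x)"
proof -
  have "blinfun_apply (S b) x - blinfun_apply (S a) x = blinfun_apply (S a) (blinfun_apply (S (b - a)) x - x)"
    using S_add[of a "b - a" x] assms by (simp add: blinfun.diff_right)
  then show ?thesis by (simp add: norm_blinfun)
qed

lemma continuous_on_orbit: "continuous_on {0..} (\<lambda>t. blinfun_apply (S t) x)"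
  unfolding continuous_on_iff
proof (intro ballI allI impI)
  fix t0 e :: real
  assume t0: "t0 \<in> {0..}" and e: "e > 0"
  obtain M where M: "M \<ge> 0" "\<And>t. t \<in> {0..t0 + 1} \<Longrightarrow> norm (S t) \<le> M"
    using norm_S_bounded_on by blast
  obtain d where d: "d > 0" "\<And>h. 0 \<le> h \<and> h < d \<Longrightarrow> norm (blinfun_apply (S h) x - x) < e / (M + 1)"
    using S_near_0[of "e / (M + 1)" x] e M(1) by auto
  have close: "norm (blinfun_apply (S b) x - blinfun_apply (S a) x) < e"
    if "0 \<le> a" "a \<le> b" "b - a < d" "a \<le> t0 + 1" for a b
  proof -
    have "norm (S a) * norm (blinfun_apply (S (b - a)) x - x) \<le> M * (e / (M + 1))"
      using M d(2)[of "b - a"] that by (intro mult_mono) auto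
    then have "norm (blinfun_apply (S b) x - blinfun_apply (S a) x) \<le> M * (e / (M + 1))"
      using norm_S_diff_le[of a b x] that by linarith
    also have "\<dots> < e" using M e by (simp add: field_simps)
    finally show ?thesis .
  qed
  show "\<exists>\<delta>>0. \<forall>t\<in>{0..}. dist t t0 < \<delta> \<longrightarrow> dist (blinfun_apply (S t) x) (blinfun_apply (S t0) x) < e"
  proof (intro exI[of _ "min d 1"] conjI ballI impI)
    fix t :: real assume "t \<in> {0..}" "dist t t0 < min d 1"
    then show "dist (blinfun_apply (S t) x) (blinfun_apply (S t0) x) < e"
      using close[of t0 t] close[of t t0] t0 by (cases "t0 \<le> t") (auto simp: dist_norm dist_real_def norm_minus_commute)
  qed (use d in simp)
qed

lemma integrable_orbit: "a \<ge> 0 \<Longrightarrow> (\<lambda>r. blinfun_apply (S r) x) integrable_on {a..b}"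
  by (rule integrable_continuous_real, rule continuous_on_subset[OF continuous_on_orbit]) auto

definition integrated_orbit :: "'x \<Rightarrow> real \<Rightarrow> 'x" where
  "integrated_orbit x a = integral {0..a} (\<lambda>r. blinfun_apply (S r) x)"

lemma integrated_orbit_0 [simp]: "integrated_orbit x 0 = 0"
  by (simp add: integrated_orbit_def)

lemma blinfun_apply_integrated_orbit:
  "blinfun_apply L (integrated_orbit x h) = integral {0..h} (\<lambda>r. blinfun_apply L (blinfun_apply (S r) x))"
  unfolding integrated_orbit_def by (rule integral_blinfun_apply[symmetric]) (rule integrable_orbit, simp)

lemma integrated_orbit_diff_quotient:
  assumes a: "a \<ge> 0"
  shows "((\<lambda>t. (integrated_orbit x (a + t) - integrated_orbit x a) /\<^sub>R t) \<longlongrightarrow> blinfun_apply (S a) x) (at_right 0)"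
proof -
  let ?f = "\<lambda>r. blinfun_apply (S r) x"
  let ?J = "integrated_orbit x"
  have "(?J has_vector_derivative ?f a) (at a within {0..a+1})"
    unfolding integrated_orbit_def using a
    by (intro integral_has_vector_derivative continuous_on_subset[OF continuous_on_orbit]) auto
  then have "((\<lambda>y. (1 / norm (y - a)) *\<^sub>R (?J y - (?J a + (y - a) *\<^sub>R ?f a))) \<longlongrightarrow> 0) (at a within {a..a+1})"
    unfolding has_vector_derivative_def has_derivative_within
    by (elim conjE tendsto_within_subset) (use a in auto)
  then have "((\<lambda>y. (1 / norm (y - a)) *\<^sub>R (?J y - (?J a + (y - a) *\<^sub>R ?f a))) \<longlongrightarrow> 0) (at_right a)"
    by (simp add: at_within_Icc_at_right)
  then have "((\<lambda>t. (1 / norm t) *\<^sub>R (?J (a + t) - (?J a + t *\<^sub>R ?f a))) \<longlongrightarrow> 0) (at_right 0)"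
    by (subst (asm) at_right_to_0) (simp add: filterlim_filtermap add.commute)
  then have "((\<lambda>t. (1 / norm t) *\<^sub>R (?J (a + t) - (?J a + t *\<^sub>R ?f a)) + ?f a) \<longlongrightarrow> ?f a) (at_right 0)"
    using tendsto_add[OF _ tendsto_const, of _ 0 _ "?f a"] by simp
  then show ?thesis
  proof (rule Lim_transform_eventually)
    show "\<forall>\<^sub>F t in at_right 0. (1 / norm t) *\<^sub>R (?J (a + t) - (?J a + t *\<^sub>R ?f a)) + ?f a
        = (?J (a + t) - ?J a) /\<^sub>R t"
      unfolding eventually_at_right_field
      by (intro exI[of _ 1]) (auto simp: algebra_simps scaleR_diff_right divide_inverse_commute)
  qed
qed

lemma S_integrated_orbit:
  assumes "h \<ge> 0" "t \<ge> 0"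
  shows "blinfun_apply (S t) (integrated_orbit x h) = integrated_orbit x (h + t) - integrated_orbit x t"
proof -
  have "blinfun_apply (S t) (integrated_orbit x h) = integral {0..h} ((\<lambda>r. blinfun_apply (S r) x) \<circ> (+) t)"
    unfolding blinfun_apply_integrated_orbit by (intro integral_cong) (use assms S_add in auto)
  also have "\<dots> = integral {t..h + t} (\<lambda>r. blinfun_apply (S r) x)"
    using integral_shift_Icc_real[of 0 h _ t] by simp
  also have "\<dots> = integrated_orbit x (h + t) - integrated_orbit x t"
    using Henstock_Kurzweil_Integration.integral_combine[of 0 t "h + t" "\<lambda>r. blinfun_apply (S r) x"]
      assms integrable_orbit[of 0 x "h + t"] unfolding integrated_orbit_def by (simp add: algebra_simps)
  finally show ?thesis .
qed

lemma gen_graph_integrated_orbit: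
  assumes h: "h \<ge> 0"
  shows "gen_graph S (integrated_orbit x h) (blinfun_apply (S h) x - x)"
  unfolding gen_graph_def
proof -
  let ?J = "integrated_orbit x"
  have "((\<lambda>t. (?J (h + t) - ?J h) /\<^sub>R t - (?J (0 + t) - ?J 0) /\<^sub>R t)
       \<longlongrightarrow> blinfun_apply (S h) x - blinfun_apply (S 0) x) (at_right 0)"
    by (intro tendsto_diff integrated_orbit_diff_quotient) (use h in auto)
  then have "((\<lambda>t. (?J (h + t) - ?J h) /\<^sub>R t - (?J (0 + t) - ?J 0) /\<^sub>R t)
       \<longlongrightarrow> blinfun_apply (S h) x - x) (at_right 0)"
    by simp
  then show "((\<lambda>t. (blinfun_apply (S t) (?J h) - ?J h) /\<^sub>R t) \<longlongrightarrow> blinfun_apply (S h) x - x) (at_right 0)"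
  proof (rule Lim_transform_eventually)
    show "\<forall>\<^sub>F t in at_right 0. (?J (h + t) - ?J h) /\<^sub>R t - (?J (0 + t) - ?J 0) /\<^sub>R t
        = (blinfun_apply (S t) (?J h) - ?J h) /\<^sub>R t"
      unfolding eventually_at_right_field
      by (intro exI[of _ 1]) (use h in \<open>auto simp: S_integrated_orbit scaleR_diff_right\<close>)
  qed
qed

lemma adj_gen_graph_integral:
  assumes adj: "adj_gen_graph S \<phi> \<psi>" and h: "h \<ge> 0"
  shows "blinfun_apply \<phi> (blinfun_apply (S h) x) - blinfun_apply \<phi> x
       = integral {0..h} (\<lambda>r. blinfun_apply \<psi> (blinfun_apply (S r) x))"
proof -
  have "blinfun_apply \<phi> (blinfun_apply (S h) x - x) = blinfun_apply \<psi> (integrated_orbit x h)"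
    using adj gen_graph_integrated_orbit[OF h] unfolding adj_gen_graph_def by blast
  then show ?thesis by (simp add: blinfun.diff_right blinfun_apply_integrated_orbit)
qed

lemma gen_graph_S:
  assumes g: "gen_graph S y z" and r: "r \<ge> 0"
  shows "gen_graph S (blinfun_apply (S r) y) (blinfun_apply (S r) z)"
  unfolding gen_graph_def
proof -
  have "((\<lambda>t. blinfun_apply (S r) ((blinfun_apply (S t) y - y) /\<^sub>R t)) \<longlongrightarrow> blinfun_apply (S r) z) (at_right 0)"
    using g unfolding gen_graph_def by (intro blinfun.tendsto tendsto_const)
  then show "((\<lambda>t. (blinfun_apply (S t) (blinfun_apply (S r) y) - blinfun_apply (S r) y) /\<^sub>R t)
      \<longlongrightarrow> blinfun_apply (S r) z) (at_right 0)"
  proof (rule Lim_transform_eventually)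
    show "\<forall>\<^sub>F t in at_right 0. blinfun_apply (S r) ((blinfun_apply (S t) y - y) /\<^sub>R t) =
        (blinfun_apply (S t) (blinfun_apply (S r) y) - blinfun_apply (S r) y) /\<^sub>R t"
      unfolding eventually_at_right_field
      by (intro exI[of _ 1]) (use r in \<open>auto simp: S_commute blinfun.scaleR_right blinfun.diff_right\<close>)
  qed
qed

lemma adj_gen_graph_compose_S:
  assumes "adj_gen_graph S \<phi> \<psi>" "r \<ge> 0"
  shows "adj_gen_graph S (\<phi> o\<^sub>L S r) (\<psi> o\<^sub>L S r)"
  using assms gen_graph_S unfolding adj_gen_graph_def by auto

lemma bounded_linear_integrated_orbit:
  assumes h: "h \<ge> 0"
  shows "bounded_linear (\<lambda>x. integrated_orbit x h)"
proof -
  obtain M where M: "\<And>t. t \<in> {0..h} \<Longrightarrow> norm (S t) \<le> M"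
    using norm_S_bounded_on by blast
  show ?thesis
  proof (rule bounded_linear_intro[where K = "h * M"])
    show "integrated_orbit (x + x') h = integrated_orbit x h + integrated_orbit x' h" for x x'
      unfolding integrated_orbit_def using integrable_orbit[of 0 _ h]
      by (simp add: blinfun.add_right integral_add)
    show "integrated_orbit (c *\<^sub>R x) h = c *\<^sub>R integrated_orbit x h" for c x
      unfolding integrated_orbit_def by (simp add: blinfun.scaleR_right)
    fix x
    have "norm (integrated_orbit x h) \<le> integral {0..h} (\<lambda>r. M * norm x)"
      unfolding integrated_orbit_def
    proof (rule integral_norm_bound_integral)
      fix r assume "r \<in> {0..h}"
      then show "norm (blinfun_apply (S r) x) \<le> M * norm x"
        using M norm_blinfun[of "S r" x] by (meson mult_right_mono norm_ge_zero order_trans)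
    qed (auto intro: integrable_orbit)
    also have "\<dots> = norm x * (h * M)" using h by simp
    finally show "norm (integrated_orbit x h) \<le> norm x * (h * M)" .
  qed
qed

lemma integrated_orbit_gen_graph:
  assumes g: "gen_graph S y z" and h: "h \<ge> 0"
  shows "integrated_orbit z h = blinfun_apply (S h) y - y"
proof -
  interpret bounded_linear "\<lambda>x. integrated_orbit x h"
    by (rule bounded_linear_integrated_orbit[OF h])
  have "((\<lambda>t. integrated_orbit ((blinfun_apply (S t) y - y) /\<^sub>R t) h) \<longlongrightarrow> integrated_orbit z h) (at_right 0)"
    using g unfolding gen_graph_def by (rule tendsto)
  moreover have "blinfun_apply (S t) (integrated_orbit y h) = integrated_orbit (blinfun_apply (S t) y) h"
    if "t \<ge> 0" for t
  proof -
    have "blinfun_apply (S t) (integrated_orbit y h) = integral {0..h} (\<lambda>r. blinfun_apply (S t) (blinfun_apply (S r) y))"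
      by (rule blinfun_apply_integrated_orbit)
    also have "\<dots> = integrated_orbit (blinfun_apply (S t) y) h"
      unfolding integrated_orbit_def by (rule integral_cong) (use that S_commute in auto)
    finally show ?thesis .
  qed
  then have "\<forall>\<^sub>F t in at_right 0. integrated_orbit ((blinfun_apply (S t) y - y) /\<^sub>R t) h
      = (blinfun_apply (S t) (integrated_orbit y h) - integrated_orbit y h) /\<^sub>R t"
    unfolding eventually_at_right_field by (intro exI[of _ 1]) (simp add: scaleR diff)
  ultimately have "((\<lambda>t. (blinfun_apply (S t) (integrated_orbit y h) - integrated_orbit y h) /\<^sub>R t)
      \<longlongrightarrow> integrated_orbit z h) (at_right 0)"
    by (rule Lim_transform_eventually)
  moreover have "((\<lambda>t. (blinfun_apply (S t) (integrated_orbit y h) - integrated_orbit y h) /\<^sub>R t)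
      \<longlongrightarrow> blinfun_apply (S h) y - y) (at_right 0)"
    using gen_graph_integrated_orbit[OF h] unfolding gen_graph_def .
  ultimately show ?thesis by (rule tendsto_unique[OF trivial_limit_at_right_real])
qed

text \<open>For every functional \<theta> and h > 0, \<theta> \<circ> integrated_orbit _ h lies in D(A*) with
  A*(\<theta> \<circ> integrated_orbit _ h) = \<theta> \<circ> S h - \<theta>; combined with a norming functional this
  shows that D(A*) separates the points of X.\<close>

lemma adj_gen_graph_separates:
  assumes sep: "\<And>\<phi> \<psi>. adj_gen_graph S \<phi> \<psi> \<Longrightarrow> blinfun_apply \<phi> z = 0"
  shows "z = 0"
proof -
  obtain \<theta> :: "'x \<Rightarrow>\<^sub>L real" where \<theta>: "blinfun_apply \<theta> z = norm z"
    using exists_norming_functional by blast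
  have vanish: "blinfun_apply \<theta> (integrated_orbit z h) = 0" if h: "h > 0" for h
  proof -
    have "bounded_linear (\<lambda>x. integrated_orbit x h)"
      using h by (simp add: bounded_linear_integrated_orbit)
    from bounded_linear_compose[OF blinfun.bounded_linear_right this]
    have bl: "bounded_linear (\<lambda>x. blinfun_apply \<theta> (integrated_orbit x h))" .
    have "adj_gen_graph S (Blinfun (\<lambda>x. blinfun_apply \<theta> (integrated_orbit x h))) ((\<theta> o\<^sub>L S h) - \<theta>)"
      unfolding adj_gen_graph_def using bl h
      by (auto simp: integrated_orbit_gen_graph bounded_linear_Blinfun_apply blinfun.diff_right
          minus_blinfun.rep_eq)
    from sep[OF this] show ?thesis using bl by (simp add: bounded_linear_Blinfun_apply)
  qed
  have "((\<lambda>t. blinfun_apply \<theta> ((integrated_orbit z (0 + t) - integrated_orbit z 0) /\<^sub>R t))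
      \<longlongrightarrow> blinfun_apply \<theta> (blinfun_apply (S 0) z)) (at_right 0)"
    by (intro blinfun.tendsto tendsto_const integrated_orbit_diff_quotient) simp
  then have "((\<lambda>t. blinfun_apply \<theta> ((integrated_orbit z (0 + t) - integrated_orbit z 0) /\<^sub>R t))
      \<longlongrightarrow> norm z) (at_right 0)"
    by (simp add: \<theta>)
  moreover have "\<forall>\<^sub>F t in at_right 0. blinfun_apply \<theta> ((integrated_orbit z (0 + t) - integrated_orbit z 0) /\<^sub>R t) = 0"
    unfolding eventually_at_right_field
    by (intro exI[of _ 1]) (auto simp: blinfun.scaleR_right vanish)
  then have "((\<lambda>t. blinfun_apply \<theta> ((integrated_orbit z (0 + t) - integrated_orbit z 0) /\<^sub>R t))
      \<longlongrightarrow> 0) (at_right 0)"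
    by (rule tendsto_eventually)
  ultimately have "norm z = 0" by (rule tendsto_unique[OF trivial_limit_at_right_real])
  then show "z = 0" by simp
qed

lemma steady_state_mild:
  assumes feas: "\<And>\<phi> \<psi>. adj_gen_graph S \<phi> \<psi> \<Longrightarrow> blinfun_apply \<psi> ys + blinfun_apply \<phi> w = 0"
    and \<tau>: "\<tau> \<ge> 0"
  shows "((\<lambda>t. blinfun_apply (S (\<tau> - t)) w) has_integral (ys - blinfun_apply (S \<tau>) ys)) {0..\<tau>}"
proof -
  have "integrated_orbit w \<tau> - (ys - blinfun_apply (S \<tau>) ys) = 0"
  proof (rule adj_gen_graph_separates)
    fix \<phi> \<psi> assume adj: "adj_gen_graph S \<phi> \<psi>"
    have "blinfun_apply \<psi> (blinfun_apply (S r) ys) = - blinfun_apply \<phi> (blinfun_apply (S r) w)"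
      if "r \<in> {0..\<tau>}" for r
      using feas[OF adj_gen_graph_compose_S[OF adj, of r]] that by simp
    then have "blinfun_apply \<phi> (blinfun_apply (S \<tau>) ys) - blinfun_apply \<phi> ys
        = integral {0..\<tau>} (\<lambda>r. - blinfun_apply \<phi> (blinfun_apply (S r) w))"
      unfolding adj_gen_graph_integral[OF adj \<tau>] by (intro integral_cong) auto
    then show "blinfun_apply \<phi> (integrated_orbit w \<tau> - (ys - blinfun_apply (S \<tau>) ys)) = 0"
      by (simp add: blinfun.diff_right blinfun_apply_integrated_orbit)
  qed
  moreover have "((\<lambda>t. blinfun_apply (S (\<tau> - t)) w) has_integral integrated_orbit w \<tau>) {0..\<tau>}"
  proof -
    have cont: "continuous_on {0..\<tau>} (\<lambda>t. blinfun_apply (S (\<tau> - t)) w)"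
      by (rule continuous_on_compose2[OF continuous_on_orbit, of _ "\<lambda>t. \<tau> - t"])
        (auto intro!: continuous_intros)
    have "integral {0..\<tau>} (\<lambda>t. blinfun_apply (S (\<tau> - t)) w)
        = integral {-\<tau>..0} ((\<lambda>r. blinfun_apply (S r) w) \<circ> (+) \<tau>)"
      using Henstock_Kurzweil_Integration.integral_reflect_real[of 0 "-\<tau>" "\<lambda>x. blinfun_apply (S (\<tau> + x)) w"]
      by (simp add: o_def)
    also have "\<dots> = integrated_orbit w \<tau>"
      using integral_shift_Icc_real[of "-\<tau>" 0 _ \<tau>] by (simp add: integrated_orbit_def)
    finally show ?thesis
      using integrable_integral[OF integrable_continuous_real[OF cont]] by simp
  qed
  ultimately show ?thesis by simp
qed

end

section \<open>Mild solutions are weak solutions\<close>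

definition grid_gap :: "real \<Rightarrow> real \<Rightarrow> real" where
  "grid_gap h t = h * of_int \<lceil>t / h\<rceil> - t"

lemma grid_gap_bounds:
  assumes h: "h > 0"
  shows "0 \<le> grid_gap h t" "grid_gap h t < h"
proof -
  have c: "of_int \<lceil>t / h\<rceil> - 1 < t / h" "t / h \<le> of_int \<lceil>t / h\<rceil>"
    using ceiling_correct by auto
  have "h * (t / h) \<le> h * of_int \<lceil>t / h\<rceil>" using c h by (intro mult_left_mono) auto
  then show "0 \<le> grid_gap h t" using h unfolding grid_gap_def by simp
  have "h * of_int \<lceil>t / h\<rceil> < h * (t / h + 1)" using c h by (intro mult_strict_left_mono) auto
  then show "grid_gap h t < h" using h unfolding grid_gap_def by (simp add: algebra_simps)
qed

lemma grid_gap_eq: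
  assumes h: "h > 0" and t: "real k * h < t" "t \<le> real (Suc k) * h"
  shows "grid_gap h t = real (Suc k) * h - t"
proof -
  have "\<lceil>t / h\<rceil> = int k + 1"
    using t h by (intro ceiling_unique) (simp_all add: field_simps)
  then show ?thesis unfolding grid_gap_def by (simp add: algebra_simps)
qed

context strongly_continuous_semigroup
begin

lemma mild_restart:
  assumes mild: "\<And>\<tau>. \<tau> \<in> {0..T} \<Longrightarrow>
      ((\<lambda>t. blinfun_apply (S (\<tau> - t)) (g t)) has_integral (y \<tau> - blinfun_apply (S \<tau>) (y 0))) {0..\<tau>}"
    and s: "0 \<le> s" and d: "0 \<le> d" and sd: "s + d \<le> T"
  shows "((\<lambda>t. blinfun_apply (S (s + d - t)) (g t)) has_integral (y (s + d) - blinfun_apply (S d) (y s))) {s..s+d}"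
proof -
  let ?F = "\<lambda>t. blinfun_apply (S (s + d - t)) (g t)"
  have whole: "(?F has_integral (y (s + d) - blinfun_apply (S (s + d)) (y 0))) {0..s+d}"
    using mild[of "s + d"] s d sd by auto
  have "blinfun_apply (S d) (y s - blinfun_apply (S s) (y 0))
      = blinfun_apply (S d) (y s) - blinfun_apply (S (s + d)) (y 0)"
    using S_add[of d s "y 0"] s d by (simp add: blinfun.diff_right add.commute)
  then have "((\<lambda>t. blinfun_apply (S d) (blinfun_apply (S (s - t)) (g t))) has_integral
      (blinfun_apply (S d) (y s) - blinfun_apply (S (s + d)) (y 0))) {0..s}"
    using has_integral_linear[OF mild[of s] blinfun.bounded_linear_right, of "S d"] s d sd
    by (simp add: o_def)
  then have first: "(?F has_integral (blinfun_apply (S d) (y s) - blinfun_apply (S (s + d)) (y 0))) {0..s}"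
  proof (rule has_integral_eq[rotated])
    show "blinfun_apply (S d) (blinfun_apply (S (s - t)) (g t)) = ?F t" if "t \<in> {0..s}" for t
      using S_add[of d "s - t"] d that by (simp add: algebra_simps)
  qed
  have "integral {0..s} ?F + integral {s..s+d} ?F = integral {0..s+d} ?F"
    using s d has_integral_integrable[OF whole] by (intro Henstock_Kurzweil_Integration.integral_combine) auto
  then have "integral {s..s+d} ?F = y (s + d) - blinfun_apply (S d) (y s)"
    unfolding integral_unique[OF whole] integral_unique[OF first] by (simp add: algebra_simps)
  moreover have "?F integrable_on {s..s+d}"
    by (rule integrable_subinterval_real[OF has_integral_integrable[OF whole]]) (use s in auto)
  ultimately show ?thesis by (metis has_integral_integral)
qed

context
  fixes T M :: real and y g :: "real \<Rightarrow> 'x" and B :: "real \<Rightarrow> real" and \<phi> \<psi> :: "'x \<Rightarrow>\<^sub>L real"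
  assumes mild: "\<And>\<tau>. \<tau> \<in> {0..T} \<Longrightarrow>
      ((\<lambda>t. blinfun_apply (S (\<tau> - t)) (g t)) has_integral (y \<tau> - blinfun_apply (S \<tau>) (y 0))) {0..\<tau>}"
    and y_cont: "continuous_on {0..T} y"
    and B_int: "B integrable_on {0..T}" and g_le_B: "\<And>t. t \<in> {0..T} \<Longrightarrow> norm (g t) \<le> B t"
    and M_nonneg: "M \<ge> 0" and S_le_M: "\<And>t. t \<in> {0..T} \<Longrightarrow> norm (S t) \<le> M"
    and adj: "adj_gen_graph S \<phi> \<psi>"
begin

lemma integrable_B: "0 \<le> a \<Longrightarrow> b \<le> T \<Longrightarrow> B integrable_on {a..b}"
  by (rule integrable_subinterval_real[OF B_int]) auto

lemma integrable_M_B: "0 \<le> a \<Longrightarrow> b \<le> T \<Longrightarrow> (\<lambda>t. M * B t) integrable_on {a..b}"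
  using integrable_B integrable_on_cmult_left[of B "{a..b}" M] by simp

lemma integrable_\<psi>_y: "0 \<le> a \<Longrightarrow> b \<le> T \<Longrightarrow> (\<lambda>t. blinfun_apply \<psi> (y t)) integrable_on {a..b}"
  by (rule integrable_continuous_real, rule continuous_on_subset[of "{0..T}"])
    (auto intro!: continuous_intros y_cont)

lemma norm_mild_increment_le:
  assumes s: "0 \<le> s" and r: "0 \<le> r" "r \<le> h" and sh: "s + h \<le> T"
  shows "norm (y (s + r) - blinfun_apply (S r) (y s)) \<le> M * integral {s..s+h} B"
proof -
  have restart: "((\<lambda>t. blinfun_apply (S (s + r - t)) (g t)) has_integral (y (s + r) - blinfun_apply (S r) (y s))) {s..s+r}"
    using mild_restart[where T = T, OF mild s r(1)] r sh by auto
  have "norm (y (s + r) - blinfun_apply (S r) (y s)) \<le> integral {s..s+r} (\<lambda>t. M * B t)"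
    unfolding integral_unique[OF restart, symmetric]
  proof (rule integral_norm_bound_integral)
    fix t assume t: "t \<in> {s..s+r}"
    have "norm (blinfun_apply (S (s + r - t)) (g t)) \<le> norm (S (s + r - t)) * norm (g t)"
      by (rule norm_blinfun)
    also have "\<dots> \<le> M * B t"
      using S_le_M[of "s + r - t"] g_le_B[of t] t s r sh M_nonneg by (intro mult_mono) auto
    finally show "norm (blinfun_apply (S (s + r - t)) (g t)) \<le> M * B t" .
  qed (use restart integrable_M_B s r sh in auto)
  also have "\<dots> \<le> integral {s..s+h} (\<lambda>t. M * B t)"
    using integrable_M_B[of s "s + r"] integrable_M_B[of s "s + h"] s r sh M_nonneg
      order_trans[OF norm_ge_zero g_le_B]
    by (intro integral_subset_le) (auto intro!: mult_nonneg_nonneg)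
  finally show ?thesis by (simp add: integral_mult_right)
qed

text \<open>On a cell [s, s + h] the adjoint equation along the free orbit S r (y s) reproduces the
  \<psi>-term up to an error of order h times the mass of B on the cell.\<close>

lemma cell_estimate:
  assumes s: "0 \<le> s" and h: "0 \<le> h" and sh: "s + h \<le> T"
  shows "\<bar>blinfun_apply \<phi> (y (s + h)) - blinfun_apply \<phi> (y s)
          - integral {s..s+h} (\<lambda>t. blinfun_apply \<psi> (y t))
          - blinfun_apply \<phi> (y (s + h) - blinfun_apply (S h) (y s))\<bar>
         \<le> h * (norm \<psi> * M * integral {s..s+h} B)"
proof -
  define C where "C = norm \<psi> * M * integral {s..s+h} B"
  have pointwise: "norm (blinfun_apply \<psi> (y (s + r)) - blinfun_apply \<psi> (blinfun_apply (S r) (y s))) \<le> C"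
    if r: "r \<in> {0..h}" for r
  proof -
    have "norm (blinfun_apply \<psi> (y (s + r)) - blinfun_apply \<psi> (blinfun_apply (S r) (y s)))
        \<le> norm \<psi> * norm (y (s + r) - blinfun_apply (S r) (y s))"
      using norm_blinfun[of \<psi> "y (s + r) - blinfun_apply (S r) (y s)"] by (simp add: blinfun.diff_right)
    also have "\<dots> \<le> C"
      unfolding C_def mult.assoc using norm_mild_increment_le[OF s _ _ sh] r
      by (intro mult_left_mono) auto
    finally show ?thesis .
  qed
  have int1: "(\<lambda>r. blinfun_apply \<psi> (y (s + r))) integrable_on {0..h}"
    by (rule integrable_continuous_real, rule continuous_on_compose2[of "{0..T}" "\<lambda>t. blinfun_apply \<psi> (y t)"])
      (use s sh in \<open>auto intro!: continuous_intros y_cont\<close>)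
  have int2: "(\<lambda>r. blinfun_apply \<psi> (blinfun_apply (S r) (y s))) integrable_on {0..h}"
    using integrable_linear[OF integrable_orbit[of 0 "y s" h] blinfun.bounded_linear_right, of \<psi>]
    by (simp add: o_def)
  have "\<bar>integral {0..h} (\<lambda>r. blinfun_apply \<psi> (y (s + r)) - blinfun_apply \<psi> (blinfun_apply (S r) (y s)))\<bar>
      \<le> h * C"
    using integral_norm_bound_integral[OF integrable_diff[OF int1 int2] integrable_const_ivl[of C 0 h]]
      pointwise h by simp
  moreover have "blinfun_apply \<phi> (blinfun_apply (S h) (y s)) - blinfun_apply \<phi> (y s)
      = integral {0..h} (\<lambda>r. blinfun_apply \<psi> (blinfun_apply (S r) (y s)))"
    by (rule adj_gen_graph_integral[OF adj h])
  moreover have "integral {s..s+h} (\<lambda>t. blinfun_apply \<psi> (y t)) = integral {0..h} (\<lambda>r. blinfun_apply \<psi> (y (s + r)))"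
    using integral_shift_Icc_real[of 0 h "\<lambda>t. blinfun_apply \<psi> (y t)" s] by (simp add: o_def add.commute)
  ultimately show ?thesis
    unfolding C_def using integral_diff[OF int1 int2] by (simp add: blinfun.diff_right abs_minus_commute)
qed

lemma grid_estimate:
  assumes h: "h > 0" and k: "real k * h \<le> T"
  shows "(\<lambda>t. blinfun_apply \<phi> (blinfun_apply (S (grid_gap h t)) (g t))) integrable_on {0..real k * h} \<and>
    \<bar>blinfun_apply \<phi> (y (real k * h)) - blinfun_apply \<phi> (y 0)
      - integral {0..real k * h} (\<lambda>t. blinfun_apply \<psi> (y t))
      - integral {0..real k * h} (\<lambda>t. blinfun_apply \<phi> (blinfun_apply (S (grid_gap h t)) (g t)))\<bar>
    \<le> h * (norm \<psi> * M * integral {0..real k * h} B)"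
  using k
proof (induction k)
  case 0
  then show ?case using integrable_on_refl[of _ "0::real"] by simp
next
  case (Suc k)
  let ?q = "\<lambda>t. blinfun_apply \<phi> (blinfun_apply (S (grid_gap h t)) (g t))"
  define s where "s = real k * h"
  have s: "0 \<le> s" and sh: "s + h \<le> T" and Suc_k: "real (Suc k) * h = s + h"
    using h Suc.prems unfolding s_def by (auto simp: algebra_simps)
  from Suc.IH have IH: "?q integrable_on {0..s}"
    "\<bar>blinfun_apply \<phi> (y s) - blinfun_apply \<phi> (y 0)
      - integral {0..s} (\<lambda>t. blinfun_apply \<psi> (y t)) - integral {0..s} ?q\<bar>
      \<le> h * (norm \<psi> * M * integral {0..s} B)"
    using sh h unfolding s_def by auto
  have restart: "((\<lambda>t. blinfun_apply \<phi> (blinfun_apply (S (s + h - t)) (g t))) has_integral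
      blinfun_apply \<phi> (y (s + h) - blinfun_apply (S h) (y s))) {s..s+h}"
    using has_integral_linear[OF mild_restart[where T = T, OF mild s _ sh] blinfun.bounded_linear_right, of \<phi>] h
    by (simp add: o_def)
  \<comment> \<open>on the cell the grid gap is s + h - t, apart from the left endpoint\<close>
  have cell: "(?q has_integral blinfun_apply \<phi> (y (s + h) - blinfun_apply (S h) (y s))) {s..s+h}"
  proof (rule has_integral_spike_finite[OF _ _ restart])
    show "?q t = blinfun_apply \<phi> (blinfun_apply (S (s + h - t)) (g t))" if "t \<in> {s..s+h} - {s}" for t
      using grid_gap_eq[OF h, of k t] that Suc_k unfolding s_def by auto
  qed simp
  have q_int: "(?q has_integral (integral {0..s} ?q + blinfun_apply \<phi> (y (s + h) - blinfun_apply (S h) (y s)))) {0..s+h}"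
    by (rule has_integral_combine[OF s _ integrable_integral[OF IH(1)] cell]) (use h in simp)
  have \<psi>_split: "integral {0..s} (\<lambda>t. blinfun_apply \<psi> (y t)) + integral {s..s+h} (\<lambda>t. blinfun_apply \<psi> (y t))
      = integral {0..s+h} (\<lambda>t. blinfun_apply \<psi> (y t))"
    using s h sh integrable_\<psi>_y by (intro Henstock_Kurzweil_Integration.integral_combine) auto
  have B_split: "integral {0..s} B + integral {s..s+h} B = integral {0..s+h} B"
    using s h sh integrable_B by (intro Henstock_Kurzweil_Integration.integral_combine) auto
  have "\<bar>blinfun_apply \<phi> (y (s + h)) - blinfun_apply \<phi> (y 0)
      - integral {0..s+h} (\<lambda>t. blinfun_apply \<psi> (y t)) - integral {0..s+h} ?q\<bar>
      \<le> h * (norm \<psi> * M * integral {0..s} B) + h * (norm \<psi> * M * integral {s..s+h} B)"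
    using IH(2) cell_estimate[OF s less_imp_le[OF h] sh] integral_unique[OF q_int] \<psi>_split
    by linarith
  also have "\<dots> = h * (norm \<psi> * M * integral {0..s+h} B)"
    unfolding B_split[symmetric] by (simp add: distrib_left)
  finally have "\<bar>blinfun_apply \<phi> (y (s + h)) - blinfun_apply \<phi> (y 0)
      - integral {0..s+h} (\<lambda>t. blinfun_apply \<psi> (y t)) - integral {0..s+h} ?q\<bar>
      \<le> h * (norm \<psi> * M * integral {0..s+h} B)" .
  then show ?case using q_int Suc_k by auto
qed

lemma tendsto_S_grid_gap:
  assumes T: "T > 0"
  shows "(\<lambda>n. blinfun_apply (S (grid_gap (T / real (Suc n)) t)) x) \<longlonglongrightarrow> x"
proof (rule LIMSEQ_I)
  fix e :: real assume "e > 0"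
  then obtain d where d: "d > 0" "\<And>h. 0 \<le> h \<and> h < d \<Longrightarrow> norm (blinfun_apply (S h) x - x) < e"
    using S_near_0 by blast
  obtain n0 :: nat where n0: "T / d \<le> real n0" using real_arch_simple by blast
  have "norm (blinfun_apply (S (grid_gap (T / real (Suc n)) t)) x - x) < e" if "n \<ge> n0" for n
  proof -
    have "T \<le> d * real n" using n0 that d(1) by (simp add: divide_le_eq mult.commute order_trans)
    then have "T < d * real (Suc n)" using d(1) by (simp add: algebra_simps)
    then have "T / real (Suc n) < d" by (simp add: divide_less_eq)
    then show ?thesis using grid_gap_bounds[of "T / real (Suc n)" t] T d(2) by simp
  qed
  then show "\<exists>n0. \<forall>n\<ge>n0. norm (blinfun_apply (S (grid_gap (T / real (Suc n)) t)) x - x) < e"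
    by blast
qed

lemma grid_integrals_tendsto:
  assumes T: "T > 0"
  shows "(\<lambda>t. blinfun_apply \<phi> (g t)) integrable_on {0..T}"
    and "(\<lambda>n. integral {0..T} (\<lambda>t. blinfun_apply \<phi> (blinfun_apply (S (grid_gap (T / real (Suc n)) t)) (g t))))
      \<longlonglongrightarrow> integral {0..T} (\<lambda>t. blinfun_apply \<phi> (g t))"
proof -
  define q where "q n t = blinfun_apply \<phi> (blinfun_apply (S (grid_gap (T / real (Suc n)) t)) (g t))" for n t
  have q_int: "q n integrable_on {0..T}" for n
    using grid_estimate[of "T / real (Suc n)" "Suc n"] T unfolding q_def by simp
  have q_le: "norm (q n t) \<le> norm \<phi> * (M * B t)" if t: "t \<in> {0..T}" for n t
  proof -
    have "T / real (Suc n) \<le> T" using T by (simp add: divide_le_eq)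
    then have "grid_gap (T / real (Suc n)) t \<in> {0..T}"
      using grid_gap_bounds[of "T / real (Suc n)" t] T by auto
    then have "norm (blinfun_apply (S (grid_gap (T / real (Suc n)) t)) (g t)) \<le> M * B t"
      using S_le_M g_le_B[OF t] norm_blinfun M_nonneg by (meson mult_mono norm_ge_zero order_trans)
    then show ?thesis
      unfolding q_def using norm_blinfun[of \<phi>] by (meson mult_left_mono norm_ge_zero order_trans)
  qed
  have q_lim: "(\<lambda>n. q n t) \<longlonglongrightarrow> blinfun_apply \<phi> (g t)" for t
    unfolding q_def by (intro blinfun.tendsto tendsto_const tendsto_S_grid_gap[OF T])
  have "(\<lambda>t. norm \<phi> * (M * B t)) integrable_on {0..T}"
    using integrable_M_B[of 0 T] integrable_on_cmult_left by fastforce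
  from dominated_convergence[OF q_int this q_le q_lim]
  show "(\<lambda>t. blinfun_apply \<phi> (g t)) integrable_on {0..T}"
    and "(\<lambda>n. integral {0..T} (\<lambda>t. blinfun_apply \<phi> (blinfun_apply (S (grid_gap (T / real (Suc n)) t)) (g t))))
      \<longlonglongrightarrow> integral {0..T} (\<lambda>t. blinfun_apply \<phi> (g t))"
    unfolding q_def by auto
qed

text \<open>Summing the cell estimates over a grid of mesh h gives an error O(h); as h \<rightarrow> 0 the grid
  integrals converge by strong continuity and dominated convergence.\<close>

lemma mild_solution_weak_identity:
  assumes T: "T > 0"
  shows "((\<lambda>t. blinfun_apply \<psi> (y t) + blinfun_apply \<phi> (g t)) has_integral
           (blinfun_apply \<phi> (y T) - blinfun_apply \<phi> (y 0))) {0..T}"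
proof -
  define h where "h n = T / real (Suc n)" for n
  define c where "c = blinfun_apply \<phi> (y T) - blinfun_apply \<phi> (y 0) - integral {0..T} (\<lambda>t. blinfun_apply \<psi> (y t))"
  let ?grid_int = "\<lambda>n. integral {0..T} (\<lambda>t. blinfun_apply \<phi> (blinfun_apply (S (grid_gap (h n) t)) (g t)))"
  have "(\<lambda>n. c - ?grid_int n) \<longlonglongrightarrow> 0"
  proof (rule Lim_null_comparison)
    have "norm (c - ?grid_int n) \<le> h n * (norm \<psi> * M * integral {0..T} B)" for n
      using grid_estimate[of "h n" "Suc n"] T unfolding c_def h_def by simp
    then show "\<forall>\<^sub>F n in sequentially. norm (c - ?grid_int n) \<le> h n * (norm \<psi> * M * integral {0..T} B)"
      by (intro always_eventually) simp
    have "h \<longlonglongrightarrow> 0"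
      unfolding h_def using LIMSEQ_Suc[OF lim_const_over_n[of T]] by simp
    then show "(\<lambda>n. h n * (norm \<psi> * M * integral {0..T} B)) \<longlonglongrightarrow> 0"
      by (rule tendsto_mult_left_zero)
  qed
  moreover have "(\<lambda>n. c - ?grid_int n) \<longlonglongrightarrow> c - integral {0..T} (\<lambda>t. blinfun_apply \<phi> (g t))"
    unfolding h_def by (intro tendsto_diff tendsto_const grid_integrals_tendsto[OF T])
  ultimately have "c = integral {0..T} (\<lambda>t. blinfun_apply \<phi> (g t))"
    using LIMSEQ_unique by fastforce
  moreover have "((\<lambda>t. blinfun_apply \<psi> (y t) + blinfun_apply \<phi> (g t)) has_integral
      (integral {0..T} (\<lambda>t. blinfun_apply \<psi> (y t)) + integral {0..T} (\<lambda>t. blinfun_apply \<phi> (g t)))) {0..T}"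
    using integrable_\<psi>_y[of 0 T] grid_integrals_tendsto(1)[OF T]
    by (intro has_integral_add integrable_integral) auto
  ultimately show ?thesis unfolding c_def by (simp add: algebra_simps)
qed

end

end

section \<open>Measurability and extended integrals\<close>

lemma borel_measurable_comp_simple_function:
  fixes y :: "real \<Rightarrow> 'x::real_normed_vector" and s :: "real \<Rightarrow> 'u::real_normed_vector"
    and F :: "'x \<Rightarrow> 'u \<Rightarrow> real"
  assumes s: "simple_function (lebesgue_on {a..b}) s" and y: "continuous_on {a..b} y"
    and F: "continuous_on UNIV (\<lambda>(v, w). F v w)"
  shows "(\<lambda>t. F (y t) (s t)) \<in> borel_measurable (lebesgue_on {a..b})"
proof -
  let ?I = "{a..b}"
  define V where "V = s ` ?I"
  have fin: "finite V" and pre: "\<And>v. v \<in> V \<Longrightarrow> s -` {v} \<inter> ?I \<in> sets (lebesgue_on ?I)"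
    using s unfolding simple_function_def V_def by auto
  have F_y: "continuous_on ?I (\<lambda>t. F (y t) v)" for v
    using continuous_on_compose2[OF F continuous_on_Pair[OF y continuous_on_const]] by auto
  have "(\<lambda>t. \<Sum>v\<in>V. indicator (s -` {v} \<inter> ?I) t * F (y t) v) \<in> borel_measurable (lebesgue_on ?I)"
    using pre continuous_imp_measurable_on_sets_lebesgue[OF F_y]
    by (intro borel_measurable_sum borel_measurable_times borel_measurable_indicator) auto
  moreover have "(\<Sum>v\<in>V. indicator (s -` {v} \<inter> ?I) t * F (y t) v) = F (y t) (s t)" if "t \<in> ?I" for t
  proof -
    have "(\<Sum>v\<in>V. indicator (s -` {v} \<inter> ?I) t * F (y t) v) = (\<Sum>v\<in>V. if v = s t then F (y t) v else 0)"
      using that by (intro sum.cong) (auto simp: indicator_def)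
    also have "\<dots> = F (y t) (s t)" using fin that V_def by (simp add: sum.delta')
    finally show ?thesis .
  qed
  ultimately show ?thesis
    by (subst measurable_cong[where g = "\<lambda>t. \<Sum>v\<in>V. indicator (s -` {v} \<inter> ?I) t * F (y t) v"]) auto
qed

lemma borel_measurable_comp_strongly_measurable:
  fixes y :: "real \<Rightarrow> 'x::real_normed_vector" and u :: "real \<Rightarrow> 'u::real_normed_vector"
    and F :: "'x \<Rightarrow> 'u \<Rightarrow> real"
  assumes u: "strongly_measurable_on {a..b} u" and y: "continuous_on {a..b} y"
    and F: "continuous_on UNIV (\<lambda>(v, w). F v w)"
  shows "(\<lambda>t. F (y t) (u t)) \<in> borel_measurable (lebesgue_on {a..b})"
proof -
  let ?I = "{a..b}"
  obtain s where s: "\<And>n. simple_function (lebesgue_on ?I) (s n)"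
    and ae: "AE t in lebesgue_on ?I. (\<lambda>n. s n t) \<longlonglongrightarrow> u t"
    using u unfolding strongly_measurable_on_def by blast
  obtain N where N: "{t \<in> space (lebesgue_on ?I). \<not> (\<lambda>n. s n t) \<longlonglongrightarrow> u t} \<subseteq> N"
    "emeasure (lebesgue_on ?I) N = 0" "N \<in> sets (lebesgue_on ?I)"
    using AE_E[OF ae] by blast
  then have "N \<in> null_sets lebesgue"
    using null_sets_restrict_space[of ?I lebesgue N] by auto
  then have "negligible N" by (simp add: negligible_iff_null_sets)
  then have "(\<lambda>t. F (y t) (u t)) measurable_on ?I"
  proof (rule measurable_on_limit[rotated])
    show "(\<lambda>t. F (y t) (s n t)) measurable_on ?I" for n
      using borel_measurable_comp_simple_function[OF s y F]
      by (simp add: measurable_on_iff_borel_measurable)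
    fix t assume "t \<in> ?I - N"
    then have "(\<lambda>n. s n t) \<longlonglongrightarrow> u t" using N(1) by auto
    then have "(\<lambda>n. (y t, s n t)) \<longlonglongrightarrow> (y t, u t)" by (intro tendsto_intros)
    from continuous_on_tendsto_compose[OF F this] show "(\<lambda>n. F (y t) (s n t)) \<longlonglongrightarrow> F (y t) (u t)"
      by simp
  qed
  then show ?thesis by (simp add: measurable_on_iff_borel_measurable)
qed

lemma integrable_lebesgue_on_iff_absolutely_integrable_on:
  "integrable (lebesgue_on {a..b::real}) f \<longleftrightarrow> f absolutely_integrable_on {a..b}"
  unfolding absolutely_integrable_on_def set_integrable_def
  by (subst integrable_restrict_space) auto

lemma integrable_norm_of_L2:
  fixes u :: "real \<Rightarrow> 'u::real_normed_vector"
  assumes "L2_on {a..b} u"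
  shows "(\<lambda>t. norm (u t)) integrable_on {a..b}"
proof -
  have u: "strongly_measurable_on {a..b} u" and sq: "integrable (lebesgue_on {a..b}) (\<lambda>t. (norm (u t))\<^sup>2)"
    using assms unfolding L2_on_def by auto
  have meas: "(\<lambda>t. norm (u t)) \<in> borel_measurable (lebesgue_on {a..b})"
    using borel_measurable_comp_strongly_measurable[OF u continuous_on_const[of _ "0::real"],
        of "\<lambda>_ w. norm w"]
    by (simp add: case_prod_unfold continuous_intros)
  have "(\<lambda>t. (norm (u t))\<^sup>2) integrable_on {a..b}"
    using sq set_lebesgue_integral_eq_integral(1)
    unfolding integrable_lebesgue_on_iff_absolutely_integrable_on by blast
  then have bound_int: "(\<lambda>t. 1 + (norm (u t))\<^sup>2) integrable_on {a..b}"
    by (intro integrable_add integrable_const_ivl)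
  have bound: "norm (norm (u t)) \<le> 1 + (norm (u t))\<^sup>2" for t
  proof -
    have "0 \<le> (norm (u t) - 1)\<^sup>2" by simp
    then have "2 * norm (u t) \<le> 1 + (norm (u t))\<^sup>2" by (simp add: power2_eq_square algebra_simps)
    then have "norm (u t) \<le> 1 + (norm (u t))\<^sup>2" using norm_ge_zero[of "u t"] by linarith
    then show ?thesis by simp
  qed
  show ?thesis
    by (rule measurable_bounded_by_integrable_imp_integrable[OF meas bound_int bound]) simp
qed

lemma ext_int_lebesgue_on:
  "ext_int {a..b} g = enn2ereal (\<integral>\<^sup>+ t. ennreal (g t) \<partial>lebesgue_on {a..b})
     - enn2ereal (\<integral>\<^sup>+ t. ennreal (- g t) \<partial>lebesgue_on {a..b})"
  unfolding ext_int_def by (simp add: nn_integral_restrict_space)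

lemma ext_int_eq_integral:
  assumes "integrable (lebesgue_on {a..b}) v"
  shows "ext_int {a..b} v = ereal (integral\<^sup>L (lebesgue_on {a..b}) v)"
proof -
  let ?M = "lebesgue_on {a..b::real}"
  obtain p where p: "p \<ge> 0" "(\<integral>\<^sup>+ t. ennreal (v t) \<partial>?M) = ennreal p"
    using integrableD(2)[OF assms] by (cases "(\<integral>\<^sup>+ t. ennreal (v t) \<partial>?M)" rule: ennreal_cases) auto
  obtain n where n: "n \<ge> 0" "(\<integral>\<^sup>+ t. ennreal (- v t) \<partial>?M) = ennreal n"
    using integrableD(3)[OF assms] by (cases "(\<integral>\<^sup>+ t. ennreal (- v t) \<partial>?M)" rule: ennreal_cases) auto
  show ?thesis
    unfolding ext_int_lebesgue_on real_lebesgue_integral_def[OF assms] p n using p n by simp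
qed

lemma ext_int_nonneg:
  assumes "\<And>t. 0 \<le> v t"
  shows "ext_int {a..b} v = enn2ereal (\<integral>\<^sup>+ t. ennreal (v t) \<partial>lebesgue_on {a..b})"
proof -
  have "(\<integral>\<^sup>+ t. ennreal (- v t) \<partial>lebesgue_on {a..b}) = (\<integral>\<^sup>+ t. 0 \<partial>lebesgue_on {a..b})"
    by (intro nn_integral_cong) (use assms in \<open>simp add: ennreal_neg\<close>)
  then show ?thesis unfolding ext_int_lebesgue_on by (simp add: zero_ennreal.rep_eq)
qed

lemma ext_int_const:
  assumes "T \<ge> 0"
  shows "ext_int {0..T} (\<lambda>t. c) = ereal (c * T)"
proof -
  have "integrable (lebesgue_on {0..T}) (\<lambda>t. c)"
    by (simp add: finite_measure.integrable_const finite_measure_lebesgue_on)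
  then show ?thesis
    using assms by (simp add: ext_int_eq_integral measure_restrict_space mult.commute)
qed

lemma integrable_if_ext_int_finite:
  assumes v: "v \<in> borel_measurable (lebesgue_on {a..b})" and lb: "\<And>t. t \<in> {a..b} \<Longrightarrow> c \<le> v t"
    and fin: "ext_int {a..b} v \<noteq> \<infinity>"
  shows "integrable (lebesgue_on {a..b}) v"
proof -
  let ?M = "lebesgue_on {a..b::real}"
  have "(\<integral>\<^sup>+ t. ennreal (- v t) \<partial>?M) \<le> (\<integral>\<^sup>+ t. ennreal (- c) \<partial>?M)"
    by (rule nn_integral_mono) (use lb in \<open>auto intro!: ennreal_leI\<close>)
  also have "\<dots> < \<infinity>"
    by (simp add: nn_integral_const emeasure_restrict_space ennreal_mult_less_top emeasure_lborel_Icc_eq)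
  finally have neg: "(\<integral>\<^sup>+ t. ennreal (- v t) \<partial>?M) < \<infinity>" .
  then obtain n where n: "(\<integral>\<^sup>+ t. ennreal (- v t) \<partial>?M) = ennreal n"
    by (cases "(\<integral>\<^sup>+ t. ennreal (- v t) \<partial>?M)" rule: ennreal_cases) simp_all
  have pos: "(\<integral>\<^sup>+ t. ennreal (v t) \<partial>?M) < \<infinity>"
    using fin unfolding ext_int_lebesgue_on n by (auto simp: top.not_eq_extremum[symmetric])
  have "(\<integral>\<^sup>+ t. ennreal (norm (v t)) \<partial>?M) = (\<integral>\<^sup>+ t. ennreal (v t) + ennreal (- v t) \<partial>?M)"
    by (intro nn_integral_cong) (simp add: ennreal_neg abs_real_def)
  also have "\<dots> = (\<integral>\<^sup>+ t. ennreal (v t) \<partial>?M) + (\<integral>\<^sup>+ t. ennreal (- v t) \<partial>?M)"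
    using v by (simp add: nn_integral_add)
  also have "\<dots> < \<infinity>" using pos neg by (simp add: ennreal_add_less_top)
  finally show ?thesis by (rule integrableI_bounded[OF v])
qed

lemma ext_int_le_add_integral:
  assumes w: "w \<in> borel_measurable (lebesgue_on {a..b})" "\<And>t. t \<in> {a..b} \<Longrightarrow> c \<le> w t"
    and v: "v \<in> borel_measurable (lebesgue_on {a..b})" "\<And>t. t \<in> {a..b} \<Longrightarrow> 0 \<le> v t"
    and h: "h absolutely_integrable_on {a..b}"
    and le: "\<And>t. t \<in> {a..b} \<Longrightarrow> v t \<le> w t + h t"
  shows "ext_int {a..b} v \<le> ext_int {a..b} w + ereal (integral {a..b} h)"
proof (cases "ext_int {a..b} w = \<infinity>")
  case False
  let ?M = "lebesgue_on {a..b::real}"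
  have w_int: "integrable ?M w" by (rule integrable_if_ext_int_finite[OF w False])
  have h_int: "integrable ?M h"
    using h by (simp add: integrable_lebesgue_on_iff_absolutely_integrable_on)
  have v_int: "integrable ?M v"
    using le v(2) by (intro Bochner_Integration.integrable_bound[OF Bochner_Integration.integrable_add[OF w_int h_int] v(1)] AE_I2) (force simp: abs_real_def)
  have "integral\<^sup>L ?M v \<le> integral\<^sup>L ?M w + integral\<^sup>L ?M h"
    using integral_mono[OF v_int Bochner_Integration.integrable_add[OF w_int h_int]] le
    by (simp add: Bochner_Integration.integral_add[OF w_int h_int])
  moreover have "integral\<^sup>L ?M h = integral {a..b} h"
    using set_lebesgue_integral_eq_integral(2)[OF h]
    by (simp add: integral_restrict_space set_lebesgue_integral_def)
  ultimately show ?thesis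
    by (simp add: ext_int_eq_integral[OF v_int] ext_int_eq_integral[OF w_int])
qed simp

section \<open>Dissipativity and the measure-turnpike property\<close>

lemma bounded_functional_on_bounded:
  fixes \<phi> :: "'a::real_normed_vector \<Rightarrow>\<^sub>L real"
  assumes "bounded E"
  shows "\<exists>C\<ge>0. \<forall>x\<in>E. \<bar>blinfun_apply \<phi> x\<bar> \<le> C"
proof -
  obtain R where R: "R \<ge> 0" "\<And>x. x \<in> E \<Longrightarrow> norm x \<le> R"
    using assms unfolding bounded_pos by (auto intro: less_imp_le)
  have "\<bar>blinfun_apply \<phi> x\<bar> \<le> norm \<phi> * R" if "x \<in> E" for x
    using norm_blinfun[of \<phi> x] mult_left_mono[OF R(2)[OF that] norm_ge_zero[of \<phi>]] by simp
  then show ?thesis using R(1) by (intro exI[of _ "norm \<phi> * R"]) auto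
qed

lemma storage_function_if_bounded:
  assumes "\<forall>x\<in>E. \<bar>St x\<bar> \<le> C"
  shows "storage_function E St"
  unfolding storage_function_def bdd_below_def bounded_iff
  using assms by (intro conjI ballI exI[of _ "- C"] exI[of _ 1] exI[of _ C]) (auto simp: abs_le_iff)

lemma admissible_borel_measurable:
  fixes G :: "'x::banach \<Rightarrow> 'u::banach \<Rightarrow> real"
  assumes "admissible S f E F T y u" and "continuous_on UNIV (\<lambda>(v, w). G v w)"
  shows "(\<lambda>t. G (y t) (u t)) \<in> borel_measurable (lebesgue_on {0..T})"
proof -
  have "strongly_measurable_on {0..T} u" "continuous_on {0..T} y"
    using assms(1) unfolding admissible_def L2_on_def by auto
  from borel_measurable_comp_strongly_measurable[OF this assms(2)] show ?thesis .
qed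

lemma emeasure_le_of_nn_integral_le:
  assumes D: "D \<in> sets M" and c: "c > 0" and ge: "\<And>x. x \<in> D \<Longrightarrow> c \<le> a x"
    and K: "K \<ge> 0" "(\<integral>\<^sup>+ x. ennreal (a x) \<partial>M) \<le> ennreal K"
  shows "emeasure M D \<le> ennreal (K / c)"
proof -
  have "ennreal c * emeasure M D = (\<integral>\<^sup>+ x. ennreal c * indicator D x \<partial>M)"
    using nn_integral_cmult_indicator[OF D] by simp
  also have "\<dots> \<le> (\<integral>\<^sup>+ x. ennreal (a x) \<partial>M)"
    using ge by (intro nn_integral_mono) (auto simp: indicator_def intro!: ennreal_leI)
  also have "\<dots> \<le> ennreal K" by (rule K(2))
  finally have bound: "ennreal c * emeasure M D \<le> ennreal K" .
  then have "emeasure M D \<noteq> \<infinity>"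
    using c by (auto simp: ennreal_mult_eq_top_iff top_unique)
  then obtain m where m: "m \<ge> 0" "emeasure M D = ennreal m"
    by (cases "emeasure M D" rule: ennreal_cases) auto
  have "c * m \<le> K"
    using bound m c K(1) by (simp add: ennreal_mult''[symmetric])
  then show ?thesis
    using m c by (simp add: field_simps ennreal_leI)
qed

lemma optimal_excess_cost_nonpos:
  assumes opt: "optimal_dyn S f f0 E F T y u" and T: "T > 0"
    and steady: "admissible S f E F T (\<lambda>_. ys) (\<lambda>_. us)"
    and f0_cont: "continuous_on UNIV (\<lambda>(y, u). f0 y u)"
    and f0_lb: "\<And>a b. b0 \<le> f0 a b"
  shows "ext_int {0..T} (\<lambda>t. f0 (y t) (u t) - f0 ys us) \<le> 0"
proof -
  let ?M = "lebesgue_on {0..T}"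
  let ?v = "\<lambda>t. f0 (y t) (u t)"
  have v_meas: "?v \<in> borel_measurable ?M"
    using opt f0_cont admissible_borel_measurable unfolding optimal_dyn_def by blast
  have "cost f0 T y u \<le> cost f0 T (\<lambda>_. ys) (\<lambda>_. us)"
    using opt steady unfolding optimal_dyn_def by blast
  then have "ext_int {0..T} ?v / ereal T \<le> ereal (f0 ys us)"
    using T by (simp add: cost_def ext_int_const)
  then have v_le: "ext_int {0..T} ?v \<le> ereal (f0 ys us * T)"
    using T by (cases "ext_int {0..T} ?v") (auto simp: field_simps)
  then have v_int: "integrable ?M ?v"
    using f0_lb by (intro integrable_if_ext_int_finite[OF v_meas, of b0]) auto
  have c_int: "integrable ?M (\<lambda>t. f0 ys us)"
    by (simp add: finite_measure.integrable_const finite_measure_lebesgue_on)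
  have "integral\<^sup>L ?M ?v \<le> f0 ys us * T"
    using v_le by (simp add: ext_int_eq_integral[OF v_int])
  then show ?thesis
    using T ext_int_eq_integral[OF Bochner_Integration.integrable_diff[OF v_int c_int]]
    by (simp add: Bochner_Integration.integral_diff[OF v_int c_int] measure_restrict_space mult.commute)
qed

lemma nn_integral_le_of_dissipation:
  assumes diss: "ereal q + ext_int {a..b} v \<le> ereal p + ext_int {a..b} w"
    and w: "ext_int {a..b} w \<le> 0" and v: "\<And>t. 0 \<le> v t"
    and K: "p - q \<le> K" "0 \<le> K"
  shows "(\<integral>\<^sup>+ t. ennreal (v t) \<partial>lebesgue_on {a..b}) \<le> ennreal K"
proof -
  have "ereal q + enn2ereal (\<integral>\<^sup>+ t. ennreal (v t) \<partial>lebesgue_on {a..b}) \<le> ereal p + ext_int {a..b} w"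
    using diss ext_int_nonneg[of v, OF v] by simp
  also have "\<dots> \<le> ereal p"
    using add_left_mono[OF w, of "ereal p"] by simp
  finally have "enn2ereal (\<integral>\<^sup>+ t. ennreal (v t) \<partial>lebesgue_on {a..b}) \<le> ereal K"
    using K(1) by (cases "enn2ereal (\<integral>\<^sup>+ t. ennreal (v t) \<partial>lebesgue_on {a..b})") auto
  then show ?thesis
    using K(2) by (simp add: less_eq_ennreal.rep_eq enn2ereal_ennreal)
qed

lemma strictly_dissipative_imp_measure_turnpike:
  assumes diss: "strictly_dissipative S f E F ys us (\<lambda>y u. f0 y u - f0 ys us) St"
    and St_bound: "\<forall>x\<in>E. \<bar>St x\<bar> \<le> C"
    and steady: "\<And>T. T > 0 \<Longrightarrow> admissible S f E F T (\<lambda>_. ys) (\<lambda>_. us)"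
    and f0_cont: "continuous_on UNIV (\<lambda>(y, u). f0 y u)"
    and f0_bdd: "bdd_below (range (\<lambda>(y, u). f0 y u))"
  shows "measure_turnpike S f f0 E F ys us"
  unfolding measure_turnpike_def
proof (intro allI impI)
  fix \<epsilon> :: real assume \<epsilon>: "\<epsilon> > 0"
  obtain \<alpha> where K: "K_class \<alpha>" and dissipation: "\<And>T y u \<tau>. T > 0 \<Longrightarrow> admissible S f E F T y u \<Longrightarrow> \<tau> \<in> {0..T} \<Longrightarrow>
      ereal (St (y \<tau>)) + ext_int {0..\<tau>} (\<lambda>t. \<alpha> (norm (y t - ys, u t - us)))
        \<le> ereal (St (y 0)) + ext_int {0..\<tau>} (\<lambda>t. f0 (y t) (u t) - f0 ys us)"
    using diss unfolding strictly_dissipative_def by blast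
  have \<alpha>_cont: "continuous_on {0..} \<alpha>" and \<alpha>_mono: "strict_mono_on {0..} \<alpha>"
    and \<alpha>_nonneg: "\<And>r. r \<ge> 0 \<Longrightarrow> \<alpha> r \<ge> 0" and \<alpha>_pos: "\<alpha> \<epsilon> > 0"
    using K \<epsilon> strict_mono_onD[of _ \<alpha> 0 \<epsilon>] unfolding K_class_def by auto
  obtain b0 where f0_lb: "\<And>a b. b0 \<le> f0 a b" using f0_bdd unfolding bdd_below_def by auto
  have dist_cont: "continuous_on UNIV (\<lambda>(a, b). norm (a - ys, b - us))"
    by (simp add: case_prod_unfold continuous_intros)
  define \<Lambda> where "\<Lambda> = max 1 (2 * C / \<alpha> \<epsilon>)"
  show "\<exists>\<Lambda>>0. \<forall>T>0. \<forall>y u. optimal_dyn S f f0 E F T y u \<longrightarrow>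
      emeasure lebesgue {t \<in> {0..T}. \<epsilon> < norm (y t - ys, u t - us)} \<le> ennreal \<Lambda>"
  proof (intro exI[of _ \<Lambda>] conjI allI impI)
    fix T :: real and y u assume T: "T > 0" and opt: "optimal_dyn S f f0 E F T y u"
    let ?M = "lebesgue_on {0..T}"
    let ?a = "\<lambda>t. \<alpha> (norm (y t - ys, u t - us))"
    let ?D = "{t \<in> {0..T}. \<epsilon> < norm (y t - ys, u t - us)}"
    have adm: "admissible S f E F T y u" using opt unfolding optimal_dyn_def by blast
    have excess: "ext_int {0..T} (\<lambda>t. f0 (y t) (u t) - f0 ys us) \<le> 0"
      by (rule optimal_excess_cost_nonpos[OF opt T steady[OF T] f0_cont f0_lb])
    have "y 0 \<in> E" "y T \<in> E" using adm T unfolding admissible_def by auto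
    then have "\<bar>St (y 0)\<bar> \<le> C" "\<bar>St (y T)\<bar> \<le> C" using St_bound by auto
    then have osc: "St (y 0) - St (y T) \<le> 2 * C" and C: "C \<ge> 0" by linarith+
    have "(\<integral>\<^sup>+ t. ennreal (?a t) \<partial>?M) \<le> ennreal (2 * C)"
      using dissipation[OF T adm, of T] T excess \<alpha>_nonneg osc C
      by (intro nn_integral_le_of_dissipation[where p = "St (y 0)" and q = "St (y T)"]) auto
    moreover have "?D \<in> sets ?M"
    proof -
      have "(\<lambda>t. norm (y t - ys, u t - us)) \<in> borel_measurable ?M"
        using admissible_borel_measurable[OF adm dist_cont] by simp
      moreover have "?D = (\<lambda>t. norm (y t - ys, u t - us)) -` {\<epsilon><..} \<inter> space ?M" by auto
      ultimately show ?thesis using measurable_sets[of _ ?M borel "{\<epsilon><..}"] by simp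
    qed
    moreover have "\<alpha> \<epsilon> \<le> ?a t" if "t \<in> ?D" for t
      using that \<epsilon> strict_mono_onD[OF \<alpha>_mono] by (auto intro: less_imp_le)
    ultimately have "emeasure ?M ?D \<le> ennreal (2 * C / \<alpha> \<epsilon>)"
      using \<alpha>_pos C by (intro emeasure_le_of_nn_integral_le) auto
    moreover have "emeasure lebesgue ?D = emeasure ?M ?D"
      by (subst emeasure_restrict_space) auto
    ultimately show "emeasure lebesgue ?D \<le> ennreal \<Lambda>"
      unfolding \<Lambda>_def by (metis (no_types, lifting) ennreal_leI max.cobounded2 order_trans)
  qed (simp add: \<Lambda>_def)
qed

lemma continuous_on_K_class_norm:
  fixes ys :: "'x::real_normed_vector" and us :: "'u::real_normed_vector"
  assumes "K_class \<alpha>"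
  shows "continuous_on UNIV (\<lambda>(a, b). \<alpha> (norm (a - ys, b - us)))"
proof -
  have "continuous_on {0..} \<alpha>"
    using assms unfolding K_class_def by blast
  moreover have "continuous_on UNIV (\<lambda>p::'x \<times> 'u. norm (fst p - ys, snd p - us))"
    by (intro continuous_intros)
  ultimately have "continuous_on UNIV (\<lambda>p::'x \<times> 'u. \<alpha> (norm (fst p - ys, snd p - us)))"
    by (rule continuous_on_compose2) auto
  then show ?thesis by (simp add: case_prod_unfold)
qed

lemma lipschitz_integrable_bound:
  assumes f_lip: "\<exists>L. \<forall>y1 u1 y2 u2. norm (f y1 u1 - f y2 u2) \<le> L * norm (y1 - y2, u1 - u2)"
    and E: "bounded E" and adm: "admissible S f E F T y u"
  shows "\<exists>B. B integrable_on {0..T} \<and> (\<forall>t\<in>{0..T}. norm (f (y t) (u t)) \<le> B t)"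
proof -
  obtain R where R: "\<And>x. x \<in> E \<Longrightarrow> norm x \<le> R"
    using E unfolding bounded_iff by blast
  obtain L where L: "\<And>y1 u1 y2 u2. norm (f y1 u1 - f y2 u2) \<le> max L 0 * norm (y1 - y2, u1 - u2)"
    using f_lip by (meson max.cobounded1 mult_right_mono norm_ge_zero order_trans)
  define B where "B t = norm (f 0 0) + max L 0 * R + max L 0 * norm (u t)" for t
  have "B integrable_on {0..T}"
    using adm integrable_norm_of_L2 integrable_on_cmult_left[of "\<lambda>t. norm (u t)" "{0..T}" "max L 0"]
    unfolding B_def admissible_def by (intro integrable_add integrable_const_ivl) auto
  moreover have "norm (f (y t) (u t)) \<le> B t" if t: "t \<in> {0..T}" for t
  proof -
    have "norm (f (y t) (u t)) \<le> norm (f 0 0) + norm (f (y t) (u t) - f 0 0)"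
      using norm_triangle_ineq[of "f 0 0" "f (y t) (u t) - f 0 0"] by simp
    also have "norm (f (y t) (u t) - f 0 0) \<le> max L 0 * (norm (y t) + norm (u t))"
      using L[of "y t" "u t" 0 0] norm_Pair_le[of "y t" "u t"]
      by (smt (verit, best) diff_zero max.cobounded2 mult_left_mono)
    also have "\<dots> \<le> max L 0 * (R + norm (u t))"
      using R adm t unfolding admissible_def by (intro mult_left_mono) auto
    finally show ?thesis unfolding B_def by (simp add: algebra_simps)
  qed
  ultimately show ?thesis by blast
qed

context strongly_continuous_semigroup
begin

lemma admissible_weak_identity:
  assumes f_lip: "\<exists>L. \<forall>y1 u1 y2 u2. norm (f y1 u1 - f y2 u2) \<le> L * norm (y1 - y2, u1 - u2)"
    and E: "bounded E" and adm: "admissible S f E F T y u"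
    and adj: "adj_gen_graph S \<phi> \<psi>" and \<tau>: "\<tau> \<in> {0..T}"
  shows "(\<lambda>t. blinfun_apply \<psi> (y t) + blinfun_apply \<phi> (f (y t) (u t))) absolutely_integrable_on {0..\<tau>}"
    and "integral {0..\<tau>} (\<lambda>t. blinfun_apply \<psi> (y t) + blinfun_apply \<phi> (f (y t) (u t)))
      = blinfun_apply \<phi> (y \<tau>) - blinfun_apply \<phi> (y 0)"
proof -
  let ?h = "\<lambda>t. blinfun_apply \<psi> (y t) + blinfun_apply \<phi> (f (y t) (u t))"
  have y_cont: "continuous_on {0..T} y"
    and mild: "\<And>\<tau>. \<tau> \<in> {0..T} \<Longrightarrow> ((\<lambda>t. blinfun_apply (S (\<tau> - t)) (f (y t) (u t))) has_integral
        (y \<tau> - blinfun_apply (S \<tau>) (y 0))) {0..\<tau>}"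
    and in_E: "\<And>t. t \<in> {0..T} \<Longrightarrow> y t \<in> E"
    using adm unfolding admissible_def by auto
  obtain B where B_int: "B integrable_on {0..T}" and f_le_B: "\<And>t. t \<in> {0..T} \<Longrightarrow> norm (f (y t) (u t)) \<le> B t"
    using lipschitz_integrable_bound[OF f_lip E adm] by blast
  obtain R where R: "\<And>x. x \<in> E \<Longrightarrow> norm x \<le> R"
    using E unfolding bounded_iff by blast
  obtain M where M: "M \<ge> 0" "\<And>t. t \<in> {0..\<tau>} \<Longrightarrow> norm (S t) \<le> M"
    using norm_S_bounded_on by blast
  have "(?h has_integral (blinfun_apply \<phi> (y \<tau>) - blinfun_apply \<phi> (y 0))) {0..\<tau>}"
  proof (cases "\<tau> = 0")
    case False
    then show ?thesis
      using \<tau> by (intro mild_solution_weak_identity[where B = B, OF _ _ _ _ M adj])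
        (auto intro: mild continuous_on_subset[OF y_cont] integrable_subinterval_real[OF B_int] f_le_B)
  qed (simp add: has_integral_refl(2))
  then show "integral {0..\<tau>} ?h = blinfun_apply \<phi> (y \<tau>) - blinfun_apply \<phi> (y 0)"
    by blast
  show "?h absolutely_integrable_on {0..\<tau>}"
  proof (rule absolutely_integrable_integrable_bound)
    show "?h integrable_on {0..\<tau>}"
      using \<open>(?h has_integral _) _\<close> by blast
    show "(\<lambda>t. norm \<psi> * R + norm \<phi> * B t) integrable_on {0..\<tau>}"
      using \<tau> integrable_subinterval_real[OF B_int, of 0 \<tau>] integrable_on_cmult_left[of B "{0..\<tau>}" "norm \<phi>"]
      by (intro integrable_add integrable_const_ivl) auto
    fix t assume "t \<in> {0..\<tau>}"
    then have t: "t \<in> {0..T}" using \<tau> by auto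
    have "norm (?h t) \<le> norm \<psi> * norm (y t) + norm \<phi> * norm (f (y t) (u t))"
      using norm_triangle_ineq norm_blinfun[of \<psi> "y t"] norm_blinfun[of \<phi> "f (y t) (u t)"]
      by (smt (verit) real_norm_def)
    also have "\<dots> \<le> norm \<psi> * R + norm \<phi> * B t"
      using R[OF in_E[OF t]] f_le_B[OF t] by (intro add_mono mult_left_mono) auto
    finally show "norm (?h t) \<le> norm \<psi> * R + norm \<phi> * B t" .
  qed
qed

lemma dissipation_inequality:
  fixes \<beta> :: "'x \<Rightarrow> 'u::banach \<Rightarrow> real"
  assumes adj: "adj_gen_graph S \<phi> \<psi>"
    and lag: "\<And>y u. y \<in> E \<Longrightarrow> u \<in> F \<Longrightarrow> lagrangian f f0 \<phi> \<psi> ys us + \<beta> y u \<le> lagrangian f f0 \<phi> \<psi> y u"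
    and feas: "blinfun_apply \<psi> ys + blinfun_apply \<phi> (f ys us) = 0"
    and \<beta>_cont: "continuous_on UNIV (\<lambda>(a, b). \<beta> a b)" and \<beta>_nonneg: "\<And>a b. \<beta> a b \<ge> 0"
    and f_lip: "\<exists>L. \<forall>y1 u1 y2 u2. norm (f y1 u1 - f y2 u2) \<le> L * norm (y1 - y2, u1 - u2)"
    and f0_cont: "continuous_on UNIV (\<lambda>(y, u). f0 y u)"
    and f0_bdd: "bdd_below (range (\<lambda>(y, u). f0 y u))"
    and E: "bounded E" and adm: "admissible S f E F T y u" and \<tau>: "\<tau> \<in> {0..T}"
  shows "ereal (- blinfun_apply \<phi> (y \<tau>)) + ext_int {0..\<tau>} (\<lambda>t. \<beta> (y t) (u t))
       \<le> ereal (- blinfun_apply \<phi> (y 0)) + ext_int {0..\<tau>} (\<lambda>t. f0 (y t) (u t) - f0 ys us)"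
proof -
  obtain b0 where b0: "\<And>a b. b0 \<le> f0 a b"
    using f0_bdd unfolding bdd_below_def by auto
  have restrict: "G \<in> borel_measurable (lebesgue_on {0..T}) \<Longrightarrow> G \<in> borel_measurable (lebesgue_on {0..\<tau>})"
    for G :: "real \<Rightarrow> real"
    by (rule measurable_restrict_mono) (use \<tau> in auto)
  have "continuous_on UNIV (\<lambda>(a, b). f0 a b - f0 ys us)"
    using f0_cont by (simp add: case_prod_unfold continuous_intros)
  then have w_meas: "(\<lambda>t. f0 (y t) (u t) - f0 ys us) \<in> borel_measurable (lebesgue_on {0..\<tau>})"
    by (intro restrict admissible_borel_measurable[OF adm])
  have v_meas: "(\<lambda>t. \<beta> (y t) (u t)) \<in> borel_measurable (lebesgue_on {0..\<tau>})"
    by (intro restrict admissible_borel_measurable[OF adm \<beta>_cont])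
  have "\<beta> (y t) (u t) \<le> f0 (y t) (u t) - f0 ys us + (blinfun_apply \<psi> (y t) + blinfun_apply \<phi> (f (y t) (u t)))"
    if "t \<in> {0..\<tau>}" for t
    using lag[of "y t" "u t"] feas adm that \<tau> unfolding lagrangian_def admissible_def by auto
  then have "ext_int {0..\<tau>} (\<lambda>t. \<beta> (y t) (u t))
      \<le> ext_int {0..\<tau>} (\<lambda>t. f0 (y t) (u t) - f0 ys us) + ereal (blinfun_apply \<phi> (y \<tau>) - blinfun_apply \<phi> (y 0))"
    using ext_int_le_add_integral[OF w_meas _ v_meas \<beta>_nonneg admissible_weak_identity(1)[OF f_lip E adm adj \<tau>],
        of "b0 - f0 ys us"] admissible_weak_identity(2)[OF f_lip E adm adj \<tau>] b0
    by (simp add: algebra_simps)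
  then have "ereal (- blinfun_apply \<phi> (y \<tau>)) + ext_int {0..\<tau>} (\<lambda>t. \<beta> (y t) (u t))
      \<le> ereal (- blinfun_apply \<phi> (y \<tau>)) + (ext_int {0..\<tau>} (\<lambda>t. f0 (y t) (u t) - f0 ys us)
          + ereal (blinfun_apply \<phi> (y \<tau>) - blinfun_apply \<phi> (y 0)))"
    by (rule add_left_mono)
  also have "\<dots> = ext_int {0..\<tau>} (\<lambda>t. f0 (y t) (u t) - f0 ys us)
      + (ereal (- blinfun_apply \<phi> (y \<tau>)) + ereal (blinfun_apply \<phi> (y \<tau>) - blinfun_apply \<phi> (y 0)))"
    by (simp only: ac_simps)
  finally show ?thesis by (simp add: add.commute)
qed

lemma admissible_steady_state:
  assumes feas: "static_feasible S f E F ys us" and T: "T \<ge> 0"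
  shows "admissible S f E F T (\<lambda>_. ys) (\<lambda>_. us)"
  unfolding admissible_def
proof (intro conjI ballI)
  show "L2_on {0..T} (\<lambda>_. us)"
    unfolding L2_on_def strongly_measurable_on_def
    by (auto intro!: exI[of _ "\<lambda>n t. us"] finite_measure.integrable_const finite_measure_lebesgue_on)
  show "((\<lambda>t. blinfun_apply (S (\<tau> - t)) (f ys us)) has_integral (ys - blinfun_apply (S \<tau>) ys)) {0..\<tau>}"
    if "\<tau> \<in> {0..T}" for \<tau>
    using feas that by (intro steady_state_mild) (auto simp: static_feasible_def)
qed (use feas in \<open>auto simp: static_feasible_def\<close>)


lemma strong_duality_imp_dissipative:
  assumes duality: "strong_duality_with S f f0 E F ys us \<phi>s" and feas: "static_feasible S f E F ys us"
    and f_lip: "\<exists>L. \<forall>y1 u1 y2 u2. norm (f y1 u1 - f y2 u2) \<le> L * norm (y1 - y2, u1 - u2)"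
    and f0_cont: "continuous_on UNIV (\<lambda>(y, u). f0 y u)"
    and f0_bdd: "bdd_below (range (\<lambda>(y, u). f0 y u))"
    and E: "bounded E"
  shows "dissipative S f E F (\<lambda>y u. f0 y u - f0 ys us) (\<lambda>y. - blinfun_apply \<phi>s y)"
  unfolding dissipative_def
proof (intro conjI allI impI ballI)
  obtain \<psi>s where adj: "adj_gen_graph S \<phi>s \<psi>s"
    and min: "\<And>y u. y \<in> E \<Longrightarrow> u \<in> F \<Longrightarrow> lagrangian f f0 \<phi>s \<psi>s ys us \<le> lagrangian f f0 \<phi>s \<psi>s y u"
    using duality unfolding strong_duality_with_def by blast
  have steady: "blinfun_apply \<psi>s ys + blinfun_apply \<phi>s (f ys us) = 0"
    using feas adj unfolding static_feasible_def by blast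
  show "storage_function E (\<lambda>y. - blinfun_apply \<phi>s y)"
    using bounded_functional_on_bounded[OF E, of \<phi>s] storage_function_if_bounded[of E] by force
  fix T :: real and y u \<tau> assume adm: "admissible S f E F T y u" and \<tau>: "\<tau> \<in> {0..T}"
  have "ereal (- blinfun_apply \<phi>s (y \<tau>)) + ext_int {0..\<tau>} (\<lambda>t. 0)
      \<le> ereal (- blinfun_apply \<phi>s (y 0)) + ext_int {0..\<tau>} (\<lambda>t. f0 (y t) (u t) - f0 ys us)"
    by (rule dissipation_inequality[OF adj _ steady _ _ f_lip f0_cont f0_bdd E adm \<tau>]) (simp_all add: min)
  then show "ereal (- blinfun_apply \<phi>s (y \<tau>))
      \<le> ereal (- blinfun_apply \<phi>s (y 0)) + ext_int {0..\<tau>} (\<lambda>t. f0 (y t) (u t) - f0 ys us)"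
    using ext_int_const[of \<tau> 0] \<tau> by simp
qed

lemma strict_strong_duality_imp_strictly_dissipative:
  assumes duality: "strict_strong_duality_with S f f0 E F ys us \<phi>s" and feas: "static_feasible S f E F ys us"
    and f_lip: "\<exists>L. \<forall>y1 u1 y2 u2. norm (f y1 u1 - f y2 u2) \<le> L * norm (y1 - y2, u1 - u2)"
    and f0_cont: "continuous_on UNIV (\<lambda>(y, u). f0 y u)"
    and f0_bdd: "bdd_below (range (\<lambda>(y, u). f0 y u))"
    and E: "bounded E"
  shows "strictly_dissipative S f E F ys us (\<lambda>y u. f0 y u - f0 ys us) (\<lambda>y. - blinfun_apply \<phi>s y)"
proof -
  obtain \<psi>s \<alpha> where adj: "adj_gen_graph S \<phi>s \<psi>s" and K: "K_class \<alpha>"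
    and min: "\<And>y u. y \<in> E \<Longrightarrow> u \<in> F \<Longrightarrow>
      lagrangian f f0 \<phi>s \<psi>s ys us + \<alpha> (norm (y - ys, u - us)) \<le> lagrangian f f0 \<phi>s \<psi>s y u"
    using duality unfolding strict_strong_duality_with_def by blast
  have \<alpha>_nonneg: "\<alpha> (norm (a - ys, b - us)) \<ge> 0" for a b
    using K unfolding K_class_def by simp
  have steady: "blinfun_apply \<psi>s ys + blinfun_apply \<phi>s (f ys us) = 0"
    using feas adj unfolding static_feasible_def by blast
  show ?thesis
    unfolding strictly_dissipative_def
  proof (intro conjI exI[of _ \<alpha>] K allI impI ballI)
    show "storage_function E (\<lambda>y. - blinfun_apply \<phi>s y)"
      using bounded_functional_on_bounded[OF E, of \<phi>s] storage_function_if_bounded[of E] by force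
    fix T :: real and y u \<tau> assume adm: "admissible S f E F T y u" and \<tau>: "\<tau> \<in> {0..T}"
    show "ereal (- blinfun_apply \<phi>s (y \<tau>)) + ext_int {0..\<tau>} (\<lambda>t. \<alpha> (norm (y t - ys, u t - us)))
        \<le> ereal (- blinfun_apply \<phi>s (y 0)) + ext_int {0..\<tau>} (\<lambda>t. f0 (y t) (u t) - f0 ys us)"
      by (rule dissipation_inequality[OF adj min steady continuous_on_K_class_norm[OF K] \<alpha>_nonneg
            f_lip f0_cont f0_bdd E adm \<tau>])
  qed
qed
end

theorem theorem4p1:
  fixes S :: "real \<Rightarrow> 'x::banach \<Rightarrow>\<^sub>L 'x"
    and f :: "'x \<Rightarrow> 'u::banach \<Rightarrow> 'x"
    and f0 :: "'x \<Rightarrow> 'u \<Rightarrow> real"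
    and E :: "'x set" and F :: "'u set"
    and ys :: 'x and us :: 'u and \<phi>s :: "'x \<Rightarrow>\<^sub>L real"
  assumes reflX: "reflexive_space TYPE('x)"
    and reflU: "reflexive_space TYPE('u)"
    and sg: "C0_semigroup S"
    and f_cont: "continuous_on UNIV (\<lambda>(y, u). f y u)"
    and f_lip: "\<exists>L. \<forall>y1 u1 y2 u2. norm (f y1 u1 - f y2 u2) \<le> L * norm (y1 - y2, u1 - u2)"
    and f0_cont: "continuous_on UNIV (\<lambda>(y, u). f0 y u)"
    and f0_bdd: "bdd_below (range (\<lambda>(y, u). f0 y u))"
    and dyn_opt_exists: "\<forall>T>0. \<exists>y u. optimal_dyn S f f0 E F T y u"
    and static_opt: "static_optimal S f f0 E F ys us"
    and E_bounded: "bounded E"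
  shows "(strong_duality_with S f f0 E F ys us \<phi>s \<longrightarrow>
            dissipative S f E F (\<lambda>y u. f0 y u - f0 ys us) (\<lambda>y. - blinfun_apply \<phi>s y))
       \<and> (strict_strong_duality_with S f f0 E F ys us \<phi>s \<longrightarrow>
            strictly_dissipative S f E F ys us (\<lambda>y u. f0 y u - f0 ys us) (\<lambda>y. - blinfun_apply \<phi>s y)
            \<and> measure_turnpike S f f0 E F ys us)"
proof -
  interpret strongly_continuous_semigroup S by unfold_locales (rule sg)
  have feas: "static_feasible S f E F ys us"
    using static_opt unfolding static_optimal_def by blast
  obtain C where C: "\<forall>x\<in>E. \<bar>- blinfun_apply \<phi>s x\<bar> \<le> C"
    using bounded_functional_on_bounded[OF E_bounded, of \<phi>s] by auto
  note hyps = feas f_lip f0_cont f0_bdd E_bounded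
  show ?thesis
  proof (intro conjI[OF impI impI] conjI)
    show "dissipative S f E F (\<lambda>y u. f0 y u - f0 ys us) (\<lambda>y. - blinfun_apply \<phi>s y)"
      if "strong_duality_with S f f0 E F ys us \<phi>s"
      using strong_duality_imp_dissipative[OF that hyps] .
    show strict: "strictly_dissipative S f E F ys us (\<lambda>y u. f0 y u - f0 ys us) (\<lambda>y. - blinfun_apply \<phi>s y)"
      if "strict_strong_duality_with S f f0 E F ys us \<phi>s"
      using strict_strong_duality_imp_strictly_dissipative[OF that hyps] .
    show "measure_turnpike S f f0 E F ys us" if "strict_strong_duality_with S f f0 E F ys us \<phi>s"
      using strictly_dissipative_imp_measure_turnpike[OF strict[OF that] C _ f0_cont f0_bdd]
        admissible_steady_state[OF feas] by simp
  qed
qed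

end
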